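(* Let $\Omega\subset\mathbb{R}^N$ be a bounded domain with smooth boundary and outward unit normal $\nu$. Let $w,w_*\in C^2(\overline\Omega)$ be positive functions, and let $a\in C^1(\overline\Omega)$ and $c\in C^2(\overline\Omega)$ be nonnegative functions. (i) Let $\beta\ge1$ be a constant and let $g\in C^{0,1}(\partial\Omega\times[0,\infty))$ be such that for every $x\in\partial\Omega$ the function $u\mapsto g(x,u)/(c(x)u)$ is nonincreasing on $[0,\infty)$. If $\frac{\partial(c w)}{\partial\nu}=g(x,w)$ and $\frac{\partial(c w_* )}{\partial\nu}=g(x,w_* )$ on $\partial\Omega$, then $$\int_\Omega\frac{c w_*[w^\beta-w_*^\beta]}{w^\beta}\Big({\rm div}\{a\nabla(cw)\}-\frac{w}{w_*}{\rm div}\{a\nabla(cw_* )\}\Big)dx\le-\int_\Omega\beta a c^2w^2\Big(\frac{w_*}{w}\Big)^{\beta-1}\Big|\nabla\frac{w_*}{w}\Big|^2dx\le0.$$ (ii) Let $\Phi\in C^{2,2}(\overline\Omega\times[0,\infty))$ satisfy $\Phi(x,0)=0$ and $\Phi_u(x,u)>0$ for $x\in\overline\Omega$, $u>0$, and let $g\in C^{0,1}(\partial\Omega\times[0,\infty))$ be such that for every $x\in\partial\Omega$ the function $u\mapsto g(x,u)/\Phi(x,u)$ is nonincreasing on $[0,\infty)$. If $\frac{\partial\Phi(x,w)}{\partial\nu}=g(x,w)$ and $\frac{\partial\Phi(x,w_* )}{\partial\nu}=g(x,w_* )$ on $\partial\Omega$, then $$\int_\Omega\frac{\Phi(x,w_*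 )[\Phi(x,w)-\Phi(x,w_* )]}{\Phi(x,w)}\Big({\rm div}[a\nabla\Phi(x,w)]-\frac{\Phi(x,w)}{\Phi(x,w_* )}{\rm div}[a\nabla\Phi(x,w_* )]\Big)dx\le-\int_\Omega a[\Phi(x,w)]^2\Big|\nabla\frac{\Phi(x,w_* )}{\Phi(x,w)}\Big|^2dx\le0.$$
   Context: Here $\Phi(x,w)$ denotes the function $x\mapsto\Phi(x,w(x))$, and $\partial/\partial\nu$ is the outward normal derivative on $\partial\Omega$. *)

theory Defs
  imports "HOL-Analysis.Analysis"
begin

definition grad :: "('a::euclidean_space \<Rightarrow> real) \<Rightarrow> 'a \<Rightarrow> 'a" where
  "grad f x = (\<Sum>i\<in>Basis. frechet_derivative f (at x) i *\<^sub>R i)"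

definition div_field :: "('a::euclidean_space \<Rightarrow> 'a) \<Rightarrow> 'a \<Rightarrow> real" where
  "div_field F x = (\<Sum>i\<in>Basis. frechet_derivative F (at x) i \<bullet> i)"

fun Ck_on :: "nat \<Rightarrow> 'a::euclidean_space set \<Rightarrow> ('a \<Rightarrow> real) \<Rightarrow> bool" where
  "Ck_on 0 U f = continuous_on U f"
| "Ck_on (Suc k) U f = (continuous_on U f \<and> f differentiable_on U \<and>
      (\<forall>v. Ck_on k U (\<lambda>x. frechet_derivative f (at x) v)))"

definition smooth_on :: "'a::euclidean_space set \<Rightarrow> ('a \<Rightarrow> real) \<Rightarrow> bool" where
  "smooth_on U f \<longleftrightarrow> (\<forall>k. Ck_on k U f)"

text \<open>f \<in> C^k(closure S): f is C^k on some open neighbourhood of S.\<close>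
definition Ck_closure :: "nat \<Rightarrow> 'a::euclidean_space set \<Rightarrow> ('a \<Rightarrow> real) \<Rightarrow> bool" where
  "Ck_closure k S f \<longleftrightarrow> (\<exists>U. open U \<and> S \<subseteq> U \<and> Ck_on k U f)"

definition defining_function :: "'a::euclidean_space set \<Rightarrow> ('a \<Rightarrow> real) \<Rightarrow> bool" where
  "defining_function \<Omega> \<rho> \<longleftrightarrow> smooth_on UNIV \<rho> \<and> \<Omega> = {x. \<rho> x < 0} \<and>
      (\<forall>x\<in>frontier \<Omega>. \<rho> x = 0 \<and> grad \<rho> x \<noteq> 0)"

definition smooth_bounded_domain :: "'a::euclidean_space set \<Rightarrow> bool" where
  "smooth_bounded_domain \<Omega> \<longleftrightarrow> open \<Omega> \<and> connected \<Omega> \<and> \<Omega> \<noteq> {} \<and> bounded \<Omega> \<and>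
      (\<exists>\<rho>. defining_function \<Omega> \<rho>)"

text \<open>Outward unit normal (independent of the choice of defining function).\<close>
definition outward_normal :: "'a::euclidean_space set \<Rightarrow> 'a \<Rightarrow> 'a" where
  "outward_normal \<Omega> x = (let \<rho> = (SOME \<rho>. defining_function \<Omega> \<rho>) in
      grad \<rho> x /\<^sub>R norm (grad \<rho> x))"

definition normal_deriv :: "'a::euclidean_space set \<Rightarrow> ('a \<Rightarrow> real) \<Rightarrow> 'a \<Rightarrow> real" where
  "normal_deriv \<Omega> f x = frechet_derivative f (at x) (outward_normal \<Omega> x)"

text \<open>g \<in> C^{0,1}(\<partial>\<Omega> \<times> [0,\<infinity>)): jointly continuous, locally Lipschitz in u
  (locally uniformly in x).\<close>
definition C01_boundary :: "'a::euclidean_space set \<Rightarrow> ('a \<Rightarrow> real \<Rightarrow> real) \<Rightarrow> bool" where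
  "C01_boundary B g \<longleftrightarrow> continuous_on (B \<times> {0..}) (\<lambda>(x,u). g x u) \<and> local_lipschitz B {0..} g"

text \<open>\<Phi> \<in> C^{2,2}(closure \<Omega> \<times> [0,\<infinity>)): jointly C^2 on a neighbourhood.\<close>
definition C22_closure :: "'a::euclidean_space set \<Rightarrow> ('a \<Rightarrow> real \<Rightarrow> real) \<Rightarrow> bool" where
  "C22_closure S \<Phi> \<longleftrightarrow> (\<exists>U. open U \<and> S \<times> {0..} \<subseteq> U \<and> Ck_on 2 U (\<lambda>(x,u). \<Phi> x u))"

end

theory Submission
  imports Defs
begin

text \<open>
  Write \<open>v, v\<^sub>*\<close> for \<open>c w, c w\<^sub>*\<close> in (i) and for \<open>\<Phi>(x,w), \<Phi>(x,w\<^sub>*)\<close> in (ii), and let \<open>r > 0\<close>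
  satisfy \<open>v\<^sub>* = r v\<close> (\<open>r = w\<^sub>*/w\<close> in (i); \<open>r = v\<^sub>*/v\<close> and \<open>\<beta> = 1\<close> in (ii)). Picone's identity
  \<open>(1 - r\<^sup>\<beta>)(v\<^sub>* div(a\<nabla>v) - v div(a\<nabla>v\<^sub>*)) = div X - \<beta> a v\<^sup>2 r\<^sup>\<beta>\<^sup>-\<^sup>1 |\<nabla>r|\<^sup>2\<close>, with
  \<open>X = (1 - r\<^sup>\<beta>)(v\<^sub>* a\<nabla>v - v a\<nabla>v\<^sub>*)\<close>, reduces both estimates to \<open>\<integral>\<^sub>\<Omega> div X \<le> 0\<close>, and the
  boundary conditions together with the monotonicity of \<open>g/(cu)\<close>, resp. \<open>g/\<Phi>\<close>, give \<open>X\<cdot>\<nu> \<le> 0\<close>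
  on \<open>\<partial>\<Omega>\<close>. No boundary integral is needed to conclude: if \<open>\<rho>\<close> is a defining function of \<open>\<Omega>\<close> and
  \<open>\<chi>\<close> a cut-off, integrating \<open>div(\<chi>(\<rho>/\<epsilon>) X) = 0\<close> turns \<open>\<integral> \<chi>(\<rho>/\<epsilon>) div X\<close> into a
  boundary-layer integral of \<open>-\<chi>'(\<rho>/\<epsilon>)/\<epsilon> X\<cdot>\<nabla>\<rho>\<close>. Near \<open>\<partial>\<Omega>\<close> we have \<open>X\<cdot>\<nabla>\<rho> \<le> \<delta>|\<nabla>\<rho>|\<^sup>2\<close>, and
  the same identity for the field \<open>\<nabla>\<rho>\<close> bounds the layer integral by \<open>\<delta> \<integral>\<^sub>\<Omega> |div \<nabla>\<rho>|\<close>.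
  Letting \<open>\<epsilon> \<rightarrow> 0\<close> and then \<open>\<delta> \<rightarrow> 0\<close> gives \<open>\<integral>\<^sub>\<Omega> div X \<le> 0\<close>.
\<close>

section \<open>Continuously differentiable functions with a given derivative\<close>

text \<open>Unlike \<^const>\<open>Ck_on\<close>, the derivative is an explicit argument, so that calculus rules can
  be stated with the derivative they produce.\<close>

definition C1_on :: "'a::real_normed_vector set \<Rightarrow> ('a \<Rightarrow> 'b::real_normed_vector) \<Rightarrow> ('a \<Rightarrow> 'a \<Rightarrow> 'b) \<Rightarrow> bool"
  where "C1_on U f f' \<longleftrightarrow> (\<forall>x\<in>U. (f has_derivative f' x) (at x)) \<and> (\<forall>h. continuous_on U (\<lambda>x. f' x h))"

definition C2_on :: "'a::real_normed_vector set \<Rightarrow> ('a \<Rightarrow> real) \<Rightarrow> ('a \<Rightarrow> 'a \<Rightarrow> real) \<Rightarrow> bool"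
  where "C2_on U f f' \<longleftrightarrow> C1_on U f f' \<and> (\<forall>h. \<exists>f''. C1_on U (\<lambda>x. f' x h) f'')"

lemma C1_onI:
  "(\<And>x. x \<in> U \<Longrightarrow> (f has_derivative f' x) (at x)) \<Longrightarrow> (\<And>h. continuous_on U (\<lambda>x. f' x h)) \<Longrightarrow> C1_on U f f'"
  unfolding C1_on_def by blast

lemma C1_on_has_derivative: "C1_on U f f' \<Longrightarrow> x \<in> U \<Longrightarrow> (f has_derivative f' x) (at x)"
  unfolding C1_on_def by blast

lemma C1_on_continuous_derivative: "C1_on U f f' \<Longrightarrow> continuous_on U (\<lambda>x. f' x h)"
  unfolding C1_on_def by blast

lemma C1_on_imp_continuous_on: "C1_on U f f' \<Longrightarrow> continuous_on U f"
  by (meson C1_on_has_derivative continuous_at_imp_continuous_on has_derivative_continuous)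

lemma C1_on_linear: "C1_on U f f' \<Longrightarrow> x \<in> U \<Longrightarrow> linear (f' x)"
  using C1_on_has_derivative has_derivative_linear by blast

lemma C1_on_subset: "C1_on U f f' \<Longrightarrow> V \<subseteq> U \<Longrightarrow> C1_on V f f'"
  unfolding C1_on_def using continuous_on_subset by blast

lemma C1_on_transform:
  assumes "C1_on U f f'" "open U" "\<And>x. x \<in> U \<Longrightarrow> f x = g x"
  shows "C1_on U g f'"
  using assms has_derivative_transform_within_open unfolding C1_on_def by blast

lemma C1_on_const: "C1_on U (\<lambda>x. c) (\<lambda>x h. 0)"
  by (rule C1_onI) auto

lemma C1_on_add:
  assumes "C1_on U f f'" "C1_on U g g'"
  shows "C1_on U (\<lambda>x. f x + g x) (\<lambda>x h. f' x h + g' x h)"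
  using assms unfolding C1_on_def by (auto intro: has_derivative_add continuous_on_add)

lemma C1_on_diff:
  assumes "C1_on U f f'" "C1_on U g g'"
  shows "C1_on U (\<lambda>x. f x - g x) (\<lambda>x h. f' x h - g' x h)"
  using assms unfolding C1_on_def by (auto intro: has_derivative_diff continuous_on_diff)

lemma C1_on_mult:
  fixes f g :: "'a::real_normed_vector \<Rightarrow> real"
  assumes "C1_on U f f'" "C1_on U g g'"
  shows "C1_on U (\<lambda>x. f x * g x) (\<lambda>x h. f x * g' x h + f' x h * g x)"
proof (rule C1_onI)
  show "((\<lambda>x. f x * g x) has_derivative (\<lambda>h. f x * g' x h + f' x h * g x)) (at x)" if "x \<in> U" for x
    using assms that by (intro has_derivative_mult C1_on_has_derivative)
  show "continuous_on U (\<lambda>x. f x * g' x h + f' x h * g x)" for h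
    using assms by (intro continuous_on_add continuous_on_mult C1_on_continuous_derivative C1_on_imp_continuous_on)
qed

lemma C1_on_scaleR:
  fixes f :: "'a::real_normed_vector \<Rightarrow> real"
  assumes "C1_on U f f'" "C1_on U g g'"
  shows "C1_on U (\<lambda>x. f x *\<^sub>R g x) (\<lambda>x h. f x *\<^sub>R g' x h + f' x h *\<^sub>R g x)"
proof (rule C1_onI)
  show "((\<lambda>x. f x *\<^sub>R g x) has_derivative (\<lambda>h. f x *\<^sub>R g' x h + f' x h *\<^sub>R g x)) (at x)" if "x \<in> U" for x
    using assms that by (intro has_derivative_scaleR C1_on_has_derivative)
  show "continuous_on U (\<lambda>x. f x *\<^sub>R g' x h + f' x h *\<^sub>R g x)" for h
    using assms by (intro continuous_on_add continuous_on_scaleR C1_on_continuous_derivative C1_on_imp_continuous_on)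
qed

lemma C1_on_inner_left:
  fixes g :: "'a::real_normed_vector \<Rightarrow> 'b::real_inner"
  assumes "C1_on U g g'"
  shows "C1_on U (\<lambda>x. g x \<bullet> b) (\<lambda>x h. g' x h \<bullet> b)"
  using assms unfolding C1_on_def
  by (auto intro: bounded_linear.has_derivative[OF bounded_linear_inner_left] continuous_on_inner)

lemma C1_on_sum:
  assumes "finite I" "\<And>i. i \<in> I \<Longrightarrow> C1_on U (f i) (f' i)"
  shows "C1_on U (\<lambda>x. \<Sum>i\<in>I. f i x) (\<lambda>x h. \<Sum>i\<in>I. f' i x h)"
  using assms unfolding C1_on_def by (auto intro!: has_derivative_sum continuous_on_sum)

lemma C1_on_compose_real:
  fixes f :: "'a::real_normed_vector \<Rightarrow> real"
  assumes f: "C1_on U f f'" and range: "f ` U \<subseteq> T" and "open T"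
    and \<psi>: "\<And>y. y \<in> T \<Longrightarrow> (\<psi> has_real_derivative \<psi>' y) (at y)" and "continuous_on T \<psi>'"
  shows "C1_on U (\<lambda>x. \<psi> (f x)) (\<lambda>x h. \<psi>' (f x) * f' x h)"
proof (rule C1_onI)
  fix x assume "x \<in> U"
  then show "((\<lambda>x. \<psi> (f x)) has_derivative (\<lambda>h. \<psi>' (f x) * f' x h)) (at x)"
    using has_derivative_compose[OF C1_on_has_derivative[OF f] \<psi>[unfolded has_field_derivative_def]] range
    by blast
next
  have "continuous_on U (\<lambda>x. \<psi>' (f x))"
    using continuous_on_compose2[OF \<open>continuous_on T \<psi>'\<close> C1_on_imp_continuous_on[OF f] range] .
  then show "continuous_on U (\<lambda>x. \<psi>' (f x) * f' x h)" for h
    by (intro continuous_on_mult C1_on_continuous_derivative[OF f])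
qed

lemma C1_on_powr:
  fixes r :: "'a::real_normed_vector \<Rightarrow> real"
  assumes "C1_on U r r'" "\<And>x. x \<in> U \<Longrightarrow> r x > 0"
  shows "C1_on U (\<lambda>x. r x powr \<beta>) (\<lambda>x h. \<beta> * r x powr (\<beta> - 1) * r' x h)"
proof -
  have "continuous_on {0<..} (\<lambda>t::real. \<beta> * t powr (\<beta> - 1))"
    by (intro continuous_on_mult continuous_on_const continuous_on_powr continuous_on_id) auto
  then show ?thesis
    using C1_on_compose_real[OF assms(1) _ open_greaterThan has_real_derivative_powr] assms(2)
    by (force simp: mult.assoc)
qed

lemma C1_on_divide:
  fixes f g :: "'a::real_normed_vector \<Rightarrow> real"
  assumes f: "C1_on U f f'" and g: "C1_on U g g'" and pos: "\<And>x. x \<in> U \<Longrightarrow> g x > 0"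
  shows "\<exists>D. C1_on U (\<lambda>x. f x / g x) D"
proof -
  have "continuous_on {0<..} (\<lambda>t::real. - (inverse t ^ Suc (Suc 0)))"
    by (intro continuous_on_minus continuous_on_power continuous_on_inverse continuous_on_id) auto
  then obtain D where "C1_on U (\<lambda>x. inverse (g x)) D"
    using C1_on_compose_real[OF g _ open_greaterThan DERIV_inverse] pos by force
  from C1_on_mult[OF f this] show ?thesis
    unfolding divide_inverse by blast
qed

lemma linear_Pair_split:
  fixes L :: "'a::real_vector \<times> real \<Rightarrow> 'b::real_vector"
  assumes "linear L"
  shows "L (h, t) = L (h, 0) + t *\<^sub>R L (0, 1)"
proof -
  have "(h, t) = (h, 0) + t *\<^sub>R (0::'a, 1::real)" by simp
  then show ?thesis by (metis assms linear_add linear_scale)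
qed

lemma C1_on_compose_Pair:
  fixes G :: "'a::real_normed_vector \<times> real \<Rightarrow> real"
  assumes G: "C1_on V G G'" and w: "C1_on U w w'" and into: "\<And>y. y \<in> U \<Longrightarrow> (y, w y) \<in> V"
  shows "C1_on U (\<lambda>y. G (y, w y)) (\<lambda>y h. G' (y, w y) (h, w' y h))"
proof (rule C1_onI)
  fix y assume y: "y \<in> U"
  have "((\<lambda>y. (y, w y)) has_derivative (\<lambda>h. (h, w' y h))) (at y)"
    by (rule has_derivative_Pair[OF has_derivative_ident C1_on_has_derivative[OF w y]])
  then show "((\<lambda>y. G (y, w y)) has_derivative (\<lambda>h. G' (y, w y) (h, w' y h))) (at y)"
    using C1_on_has_derivative[OF G into[OF y]] by (rule has_derivative_compose)
next
  fix h
  have "continuous_on U (\<lambda>y. (y, w y))"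
    by (intro continuous_on_Pair continuous_on_id C1_on_imp_continuous_on[OF w])
  moreover have "(\<lambda>y. (y, w y)) ` U \<subseteq> V"
    using into by blast
  ultimately have "continuous_on U (\<lambda>y. G' (y, w y) k)" for k
    by (rule continuous_on_compose2[OF C1_on_continuous_derivative[OF G]])
  then have "continuous_on U (\<lambda>y. G' (y, w y) (h, 0) + w' y h * G' (y, w y) (0, 1))"
    by (intro continuous_on_add continuous_on_mult C1_on_continuous_derivative[OF w])
  moreover have "G' (y, w y) (h, w' y h) = G' (y, w y) (h, 0) + w' y h * G' (y, w y) (0, 1)" if "y \<in> U" for y
    using linear_Pair_split[OF C1_on_linear[OF G into[OF that]], of h "w' y h"] by simp
  ultimately show "continuous_on U (\<lambda>y. G' (y, w y) (h, w' y h))"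
    using continuous_on_cong by force
qed

lemma C2_on_imp_C1_on: "C2_on U f f' \<Longrightarrow> C1_on U f f'"
  unfolding C2_on_def by blast

lemma C2_on_imp_C1_on_derivative: "C2_on U f f' \<Longrightarrow> \<exists>f''. C1_on U (\<lambda>x. f' x h) f''"
  unfolding C2_on_def by blast

lemma C2_on_subset: "C2_on U f f' \<Longrightarrow> V \<subseteq> U \<Longrightarrow> C2_on V f f'"
  unfolding C2_on_def using C1_on_subset by blast

lemma C2_on_mult:
  assumes f: "C2_on U f f'" and g: "C2_on U g g'"
  shows "C2_on U (\<lambda>x. f x * g x) (\<lambda>x h. f x * g' x h + f' x h * g x)"
  unfolding C2_on_def
proof (intro conjI allI)
  have f1: "C1_on U f f'" and g1: "C1_on U g g'"
    using f g by (simp_all add: C2_on_imp_C1_on)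
  then show "C1_on U (\<lambda>x. f x * g x) (\<lambda>x h. f x * g' x h + f' x h * g x)"
    by (rule C1_on_mult)
  fix h
  obtain f'' where f'': "C1_on U (\<lambda>x. f' x h) f''"
    using C2_on_imp_C1_on_derivative[OF f] by blast
  obtain g'' where g'': "C1_on U (\<lambda>x. g' x h) g''"
    using C2_on_imp_C1_on_derivative[OF g] by blast
  show "\<exists>D. C1_on U (\<lambda>x. f x * g' x h + f' x h * g x) D"
    using C1_on_add[OF C1_on_mult[OF f1 g''] C1_on_mult[OF f'' g1]] by blast
qed

lemma C2_on_compose_Pair:
  fixes G :: "'a::real_normed_vector \<times> real \<Rightarrow> real"
  assumes G: "C2_on V G G'" and w: "C2_on U w w'" and into: "\<And>y. y \<in> U \<Longrightarrow> (y, w y) \<in> V"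
    and "open U"
  shows "C2_on U (\<lambda>y. G (y, w y)) (\<lambda>y h. G' (y, w y) (h, w' y h))"
  unfolding C2_on_def
proof (intro conjI allI)
  have G1: "C1_on V G G'" and w1: "C1_on U w w'"
    using G w by (simp_all add: C2_on_imp_C1_on)
  then show "C1_on U (\<lambda>y. G (y, w y)) (\<lambda>y h. G' (y, w y) (h, w' y h))"
    using C1_on_compose_Pair[OF G1 w1 into] by simp
  fix h
  obtain D1 where D1: "C1_on V (\<lambda>z. G' z (h, 0)) D1"
    using C2_on_imp_C1_on_derivative[OF G] by blast
  obtain D2 where D2: "C1_on V (\<lambda>z. G' z (0, 1)) D2"
    using C2_on_imp_C1_on_derivative[OF G] by blast
  obtain D3 where D3: "C1_on U (\<lambda>y. w' y h) D3"
    using C2_on_imp_C1_on_derivative[OF w] by blast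
  have sum_C1: "C1_on U (\<lambda>y. G' (y, w y) (h, 0) + w' y h * G' (y, w y) (0, 1))
      (\<lambda>y k. D1 (y, w y) (k, w' y k) + (w' y h * D2 (y, w y) (k, w' y k) + D3 y k * G' (y, w y) (0, 1)))"
    using C1_on_add[OF C1_on_compose_Pair[OF D1 w1 into] C1_on_mult[OF D3 C1_on_compose_Pair[OF D2 w1 into]]]
    by simp
  have "G' (y, w y) (h, 0) + w' y h * G' (y, w y) (0, 1) = G' (y, w y) (h, w' y h)" if "y \<in> U" for y
    using linear_Pair_split[OF C1_on_linear[OF G1 into[OF that]], of h "w' y h"] by simp
  then have "C1_on U (\<lambda>y. G' (y, w y) (h, w' y h))
      (\<lambda>y k. D1 (y, w y) (k, w' y k) + (w' y h * D2 (y, w y) (k, w' y k) + D3 y k * G' (y, w y) (0, 1)))"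
    by (rule C1_on_transform[OF sum_C1 \<open>open U\<close>])
  then show "\<exists>D. C1_on U (\<lambda>y. G' (y, w y) (h, w' y h)) D"
    by blast
qed

lemma Ck_on_Suc_imp_C1_on:
  assumes "open U" "Ck_on (Suc k) U f"
  shows "C1_on U f (\<lambda>x. frechet_derivative f (at x))"
proof (rule C1_onI)
  show "(f has_derivative frechet_derivative f (at x)) (at x)" if "x \<in> U" for x
    using assms that by (simp add: differentiable_on_eq_differentiable_at frechet_derivative_works)
  show "continuous_on U (\<lambda>x. frechet_derivative f (at x) h)" for h
    using assms(2) by (cases k) auto
qed

lemma Ck_on_2_imp_C2_on:
  assumes "open U" "Ck_on 2 U f"
  shows "C2_on U f (\<lambda>x. frechet_derivative f (at x))"
proof -
  have "Ck_on (Suc 1) U f"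
    using assms(2) by (simp add: numeral_2_eq_2)
  then have "Ck_on (Suc 0) U (\<lambda>x. frechet_derivative f (at x) h)" for h
    by simp
  then show ?thesis
    using Ck_on_Suc_imp_C1_on[OF assms(1) \<open>Ck_on (Suc 1) U f\<close>] Ck_on_Suc_imp_C1_on[OF assms(1)]
    unfolding C2_on_def by blast
qed

lemma Ck_closure_2_imp_C2_on:
  "Ck_closure 2 S f \<Longrightarrow> \<exists>U. open U \<and> S \<subseteq> U \<and> C2_on U f (\<lambda>x. frechet_derivative f (at x))"
  unfolding Ck_closure_def using Ck_on_2_imp_C2_on by blast

lemma Ck_closure_1_imp_C1_on:
  "Ck_closure 1 S f \<Longrightarrow> \<exists>U. open U \<and> S \<subseteq> U \<and> C1_on U f (\<lambda>x. frechet_derivative f (at x))"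
  unfolding Ck_closure_def using Ck_on_Suc_imp_C1_on[of _ 0] by (auto simp: One_nat_def)

section \<open>Gradient, divergence and normal derivative\<close>

lemma grad_eq_sum: "(f has_derivative f') (at x) \<Longrightarrow> grad f x = (\<Sum>i\<in>Basis. f' i *\<^sub>R i)"
  unfolding grad_def by (metis frechet_derivative_at)

lemma inner_grad:
  fixes f :: "'a::euclidean_space \<Rightarrow> real"
  assumes "(f has_derivative f') (at x)"
  shows "grad f x \<bullet> h = f' h"
proof -
  have "f' h = f' (\<Sum>i\<in>Basis. (h \<bullet> i) *\<^sub>R i)"
    by (simp add: euclidean_representation)
  also have "\<dots> = (\<Sum>i\<in>Basis. (h \<bullet> i) * f' i)"
    using has_derivative_linear[OF assms] by (simp add: linear_sum linear_scale)
  also have "\<dots> = grad f x \<bullet> h"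
    by (simp add: grad_eq_sum[OF assms] inner_sum_left inner_sum_right inner_commute mult.commute)
  finally show ?thesis
    by simp
qed

lemma div_field_eq_sum: "(F has_derivative F') (at x) \<Longrightarrow> div_field F x = (\<Sum>i\<in>Basis. F' i \<bullet> i)"
  unfolding div_field_def by (metis frechet_derivative_at)

lemma div_field_scaleR:
  fixes F :: "'a::euclidean_space \<Rightarrow> 'a"
  assumes \<phi>: "(\<phi> has_derivative \<phi>') (at x)" and F: "(F has_derivative F') (at x)"
  shows "div_field (\<lambda>y. \<phi> y *\<^sub>R F y) x = \<phi> x * div_field F x + grad \<phi> x \<bullet> F x"
proof -
  have "div_field (\<lambda>y. \<phi> y *\<^sub>R F y) x = (\<Sum>i\<in>Basis. (\<phi> x *\<^sub>R F' i + \<phi>' i *\<^sub>R F x) \<bullet> i)"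
    by (rule div_field_eq_sum[OF has_derivative_scaleR[OF \<phi> F]])
  also have "\<dots> = \<phi> x * (\<Sum>i\<in>Basis. F' i \<bullet> i) + (\<Sum>i\<in>Basis. (F x \<bullet> i) * \<phi>' i)"
    by (simp add: inner_add_left sum.distrib sum_distrib_left mult.commute)
  also have "(\<Sum>i\<in>Basis. (F x \<bullet> i) * \<phi>' i) = grad \<phi> x \<bullet> F x"
    by (simp add: grad_eq_sum[OF \<phi>] inner_sum_left inner_sum_right inner_commute mult.commute)
  finally show ?thesis
    using div_field_eq_sum[OF F] by simp
qed

lemma div_field_diff:
  fixes F G :: "'a::euclidean_space \<Rightarrow> 'a"
  assumes "(F has_derivative F') (at x)" "(G has_derivative G') (at x)"
  shows "div_field (\<lambda>y. F y - G y) x = div_field F x - div_field G x"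
  using div_field_eq_sum[OF has_derivative_diff[OF assms]] div_field_eq_sum[OF assms(1)]
    div_field_eq_sum[OF assms(2)]
  by (simp add: inner_diff_left sum_subtractf)

lemma continuous_on_grad:
  fixes f :: "'a::euclidean_space \<Rightarrow> real"
  assumes "C1_on U f f'"
  shows "continuous_on U (grad f)"
proof -
  have "continuous_on U (\<lambda>x. \<Sum>i\<in>Basis. f' x i *\<^sub>R i)"
    by (intro continuous_on_sum continuous_on_scaleR C1_on_continuous_derivative[OF assms] continuous_on_const)
  then show ?thesis
    using grad_eq_sum[OF C1_on_has_derivative[OF assms]] continuous_on_cong by force
qed

lemma continuous_on_div_field:
  fixes F :: "'a::euclidean_space \<Rightarrow> 'a"
  assumes "C1_on U F F'"
  shows "continuous_on U (div_field F)"
proof -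
  have "continuous_on U (\<lambda>x. \<Sum>i\<in>Basis. F' x i \<bullet> i)"
    by (intro continuous_on_sum continuous_on_inner C1_on_continuous_derivative[OF assms] continuous_on_const)
  then show ?thesis
    using div_field_eq_sum[OF C1_on_has_derivative[OF assms]] continuous_on_cong by force
qed

lemma C1_on_grad:
  fixes f :: "'a::euclidean_space \<Rightarrow> real"
  assumes "open U" "C2_on U f f'"
  shows "\<exists>G. C1_on U (grad f) G"
proof -
  obtain f'' where f'': "C1_on U (\<lambda>x. f' x i) (f'' i)" if "i \<in> Basis" for i
    using C2_on_imp_C1_on_derivative[OF assms(2)] by metis
  have "C1_on U (\<lambda>x. \<Sum>i\<in>Basis. f' x i *\<^sub>R i) (\<lambda>x h. \<Sum>i\<in>Basis. f' x i *\<^sub>R 0 + f'' i x h *\<^sub>R i)"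
    by (intro C1_on_sum C1_on_scaleR f'' C1_on_const finite_Basis)
  then have "C1_on U (grad f) (\<lambda>x h. \<Sum>i\<in>Basis. f' x i *\<^sub>R 0 + f'' i x h *\<^sub>R i)"
    by (rule C1_on_transform[OF _ assms(1)])
      (metis grad_eq_sum C1_on_has_derivative C2_on_imp_C1_on assms(2))
  then show ?thesis
    by blast
qed

lemma normal_deriv_eq_inner_grad:
  "(f has_derivative f') (at x) \<Longrightarrow> normal_deriv \<Omega> f x = grad f x \<bullet> outward_normal \<Omega> x"
  unfolding normal_deriv_def by (simp add: frechet_derivative_at[symmetric] inner_grad)

section \<open>Integrals of derivatives of compactly supported functions\<close>

lemma has_integral_compact_support:
  fixes g :: "'a::euclidean_space \<Rightarrow> real"
  assumes g: "continuous_on UNIV g" and K: "compact K" and supp: "\<And>x. x \<notin> K \<Longrightarrow> g x = 0"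
  shows "(g has_integral integral UNIV g) UNIV" "((\<lambda>x. g (x + c)) has_integral integral UNIV g) UNIV"
proof -
  obtain a where a: "K \<subseteq> cbox (-a) a"
    using bounded_subset_cbox_symmetric[OF compact_imp_bounded[OF K]] by blast
  have gB: "(g has_integral integral (cbox (-a) a) g) (cbox (-a) a)"
    using integrable_continuous[OF continuous_on_subset[OF g subset_UNIV]] by blast
  then have "(g has_integral integral (cbox (-a) a) g) UNIV"
    by (rule has_integral_on_superset) (use a supp in auto)
  then show gU: "(g has_integral integral UNIV g) UNIV"
    using integral_unique by force
  from has_integral_affinity[OF gB, of 1 c]
  have "((\<lambda>x. g (x + c)) has_integral integral (cbox (-a) a) g) ((\<lambda>x. x - c) ` cbox (-a) a)"
    by simp
  then have "((\<lambda>x. g (x + c)) has_integral integral (cbox (-a) a) g) UNIV"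
    by (rule has_integral_on_superset) (use a supp in \<open>force+\<close>)
  then show "((\<lambda>x. g (x + c)) has_integral integral UNIV g) UNIV"
    using gU \<open>(g has_integral integral (cbox (-a) a) g) UNIV\<close> integral_unique by metis
qed

lemma has_real_derivative_along_line:
  fixes g :: "'a::real_normed_vector \<Rightarrow> real"
  assumes "(g has_derivative g') (at (x + s *\<^sub>R v))"
  shows "((\<lambda>s. g (x + s *\<^sub>R v)) has_real_derivative g' v) (at s)"
proof -
  have "((\<lambda>s. x + s *\<^sub>R v) has_derivative (\<lambda>s. s *\<^sub>R v)) (at s)"
    by (auto intro!: derivative_eq_intros)
  from has_derivative_compose[OF this assms]
  have "((\<lambda>s. g (x + s *\<^sub>R v)) has_derivative (\<lambda>s. g' (s *\<^sub>R v))) (at s)" .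
  moreover have "(\<lambda>s. g' (s *\<^sub>R v)) = (\<lambda>s. g' v * s)"
    using linear_cmul[OF has_derivative_linear[OF assms]] by (simp add: mult.commute)
  ultimately show ?thesis
    by (simp add: has_field_derivative_def)
qed

lemma difference_quotient_tendsto:
  fixes g :: "'a::real_normed_vector \<Rightarrow> real"
  assumes "(g has_derivative g') (at x)"
  shows "(\<lambda>n. (g (x + inverse (real (Suc n)) *\<^sub>R v) - g x) / inverse (real (Suc n))) \<longlonglongrightarrow> g' v"
proof -
  have "((\<lambda>s. g (x + s *\<^sub>R v)) has_real_derivative g' v) (at 0)"
    using assms by (intro has_real_derivative_along_line) simp
  then have "((\<lambda>s. (g (x + s *\<^sub>R v) - g x) / s) \<longlongrightarrow> g' v) (at 0)"
    by (simp add: DERIV_def)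
  moreover have "filterlim (\<lambda>n. inverse (real (Suc n))) (at 0) sequentially"
    using LIMSEQ_inverse_real_of_nat by (simp add: filterlim_at)
  ultimately show ?thesis
    by (rule filterlim_compose)
qed

lemma difference_quotient_bound:
  fixes g :: "'a::real_normed_vector \<Rightarrow> real"
  assumes der: "\<And>x. (g has_derivative g' x) (at x)" and t: "0 < t" "t \<le> 1"
    and R: "\<And>x. x \<in> K \<Longrightarrow> norm x \<le> R" and supp: "\<And>x. x \<notin> K \<Longrightarrow> g x = 0"
    and B: "\<And>y. y \<in> cball 0 (R + 2 * norm v) \<Longrightarrow> \<bar>g' y v\<bar> \<le> B"
  shows "\<bar>(g (x + t *\<^sub>R v) - g x) / t\<bar> \<le> (if x \<in> cball 0 (R + norm v) then B else 0)"
proof (cases "x \<in> cball 0 (R + norm v)")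
  case True
  obtain z where z: "0 < z" "z < t" "g (x + t *\<^sub>R v) - g (x + 0 *\<^sub>R v) = (t - 0) * g' (x + z *\<^sub>R v) v"
    using MVT2[OF t(1), where f="\<lambda>s. g (x + s *\<^sub>R v)" and f'="\<lambda>s. g' (x + s *\<^sub>R v) v"]
      has_real_derivative_along_line[OF der] by blast
  have "norm (z *\<^sub>R v) \<le> norm v"
    using z t by (simp add: mult_left_le_one_le)
  then have "norm (x + z *\<^sub>R v) \<le> R + 2 * norm v"
    using True norm_triangle_ineq[of x "z *\<^sub>R v"] by simp
  then show ?thesis
    using True B[of "x + z *\<^sub>R v"] z t by simp
next
  case False
  have "norm (t *\<^sub>R v) \<le> norm v"
    using t by (simp add: mult_left_le_one_le)
  then have "R < norm (x + t *\<^sub>R v)"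
    using False norm_triangle_ineq2[of x "- (t *\<^sub>R v)"] by simp
  then have "x \<notin> K" "x + t *\<^sub>R v \<notin> K"
    using False R[of x] R[of "x + t *\<^sub>R v"] norm_ge_zero[of v] by auto
  then show ?thesis
    using False supp by simp
qed

lemma integral_derivative_compact_support:
  fixes g :: "'a::euclidean_space \<Rightarrow> real"
  assumes der: "\<And>x. (g has_derivative g' x) (at x)" and cont: "continuous_on UNIV (\<lambda>x. g' x v)"
    and K: "compact K" and supp: "\<And>x. x \<notin> K \<Longrightarrow> g x = 0"
  shows "((\<lambda>x. g' x v) has_integral 0) UNIV"
proof -
  define t where "t n = inverse (real (Suc n))" for n
  define q where "q n = (\<lambda>x. (g (x + t n *\<^sub>R v) - g x) / t n)" for n
  have t: "0 < t n" "t n \<le> 1" for n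
    by (simp_all add: t_def inverse_le_1_iff)
  have "continuous_on UNIV g"
    by (meson der continuous_at_imp_continuous_on has_derivative_continuous)
  have q0: "(q n has_integral 0) UNIV" for n
  proof -
    have "((\<lambda>x. g (x + t n *\<^sub>R v) - g x) has_integral 0) UNIV"
      using has_integral_diff[OF has_integral_compact_support(2,1)[OF \<open>continuous_on UNIV g\<close> K supp]] by simp
    from has_integral_mult_left[OF this, of "inverse (t n)"] show ?thesis
      by (simp add: q_def divide_inverse)
  qed
  obtain R where R: "\<And>x. x \<in> K \<Longrightarrow> norm x \<le> R"
    using compact_imp_bounded[OF K] unfolding bounded_iff by blast
  obtain B where B: "\<And>y. y \<in> cball 0 (R + 2 * norm v) \<Longrightarrow> \<bar>g' y v\<bar> \<le> B"
    using compact_imp_bounded[OF compact_continuous_image[OF continuous_on_subset[OF cont subset_UNIV]]]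
    unfolding bounded_iff by (metis compact_cball image_eqI real_norm_def)
  have dom: "norm (q n x) \<le> (if x \<in> cball 0 (R + norm v) then B else 0)" for n x
    unfolding q_def real_norm_def by (rule difference_quotient_bound[OF der t R supp B])
  have "(\<lambda>x. B) integrable_on cball 0 (R + norm v)"
    by (rule integrable_on_const) simp
  then have dom_int: "(\<lambda>x. if x \<in> cball 0 (R + norm v) then B else 0) integrable_on UNIV"
    by (simp only: integrable_restrict_UNIV)
  have lim: "(\<lambda>n. q n x) \<longlonglongrightarrow> g' x v" for x
    unfolding q_def t_def by (rule difference_quotient_tendsto[OF der])
  have "q n integrable_on UNIV" for n
    using q0 by blast
  then have int: "(\<lambda>x. g' x v) integrable_on UNIV"
    and "(\<lambda>n. integral UNIV (q n)) \<longlonglongrightarrow> integral UNIV (\<lambda>x. g' x v)"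
    using dominated_convergence[of q UNIV _ "\<lambda>x. g' x v", OF _ dom_int] dom lim by blast+
  moreover have "integral UNIV (q n) = 0" for n
    using q0 by (rule integral_unique)
  ultimately have "integral UNIV (\<lambda>x. g' x v) = 0"
    by (simp add: LIMSEQ_const_iff)
  then show ?thesis
    using integrable_integral[OF int] by simp
qed

lemma integral_derivative_compact_support_open:
  fixes g :: "'a::euclidean_space \<Rightarrow> real"
  assumes "open U" and K: "compact K" "K \<subseteq> S" "S \<subseteq> U"
    and g: "C1_on U g g'" and supp: "\<And>y. y \<notin> K \<Longrightarrow> g y = 0"
  shows "((\<lambda>y. g' y h) has_integral 0) S"
proof -
  have "open (- K)"
    using K(1) by (simp add: compact_imp_closed open_Compl)
  have zero: "(g has_derivative (\<lambda>h. 0)) (at y)" if "y \<notin> K" for y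
    by (rule has_derivative_transform_within_open[where f="\<lambda>x. 0" and s="- K"])
      (use \<open>open (- K)\<close> that supp in auto)
  define G where "G y = (if y \<in> U then g' y else (\<lambda>h. 0))" for y
  have der: "(g has_derivative G y) (at y)" for y
    using C1_on_has_derivative[OF g] zero K unfolding G_def by auto
  have G0: "G y h = 0" if "y \<notin> K" for y h
    using has_derivative_unique[OF der zero[OF that]] by simp
  have "continuous_on U (\<lambda>y. G y h)"
    using C1_on_continuous_derivative[OF g] by (rule continuous_on_cong[THEN iffD1, rotated 2]) (simp_all add: G_def)
  moreover have "continuous_on (- K) (\<lambda>y. G y h)"
    by (rule continuous_on_cong[THEN iffD1, OF refl _ continuous_on_const[of _ 0]]) (simp add: G0)
  ultimately have "continuous_on (U \<union> - K) (\<lambda>y. G y h)"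
    by (rule continuous_on_open_Un[OF \<open>open U\<close> \<open>open (- K)\<close>])
  moreover have "U \<union> - K = UNIV"
    using K by blast
  ultimately have "((\<lambda>y. G y h) has_integral 0) UNIV"
    using integral_derivative_compact_support[OF der _ K(1) supp] by simp
  then have "((\<lambda>y. if y \<in> S then G y h else 0) has_integral 0) UNIV"
    by (rule has_integral_cong[THEN iffD1, rotated]) (use K G0 in auto)
  then have "((\<lambda>y. G y h) has_integral 0) S"
    using has_integral_restrict_UNIV by blast
  then show ?thesis
    by (rule has_integral_cong[THEN iffD1, rotated]) (use K in \<open>auto simp: G_def\<close>)
qed

lemma has_integral_div_field_compact_support:
  fixes Y :: "'a::euclidean_space \<Rightarrow> 'a"
  assumes "open U" "compact K" "K \<subseteq> S" "S \<subseteq> U"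
    and Y: "C1_on U Y Y'" and supp: "\<And>y. y \<notin> K \<Longrightarrow> Y y = 0"
  shows "(div_field Y has_integral 0) S"
proof -
  have "((\<lambda>y. Y' y i \<bullet> i) has_integral 0) S" for i
    by (rule integral_derivative_compact_support_open[OF assms(1-4) C1_on_inner_left[OF Y]]) (simp add: supp)
  then have "((\<lambda>y. \<Sum>i\<in>Basis. Y' y i \<bullet> i) has_integral 0) S"
    using has_integral_sum[OF finite_Basis, of "\<lambda>i y. Y' y i \<bullet> i" "\<lambda>i. 0" S] by simp
  then show ?thesis
  proof (rule has_integral_cong[THEN iffD1, rotated])
    fix x assume "x \<in> S"
    then show "(\<Sum>i\<in>Basis. Y' x i \<bullet> i) = div_field Y x"
      using assms(4) div_field_eq_sum[OF C1_on_has_derivative[OF Y]] by auto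
  qed
qed

lemma integrable_on_subset_of_compact:
  fixes f :: "'a::euclidean_space \<Rightarrow> real"
  assumes "compact S" "continuous_on S f" "T \<subseteq> S" "T \<in> sets lebesgue"
  shows "f integrable_on T"
proof -
  have "set_integrable lborel S f"
    using borel_integrable_compact[OF assms(1,2)] unfolding set_integrable_def .
  then have "f absolutely_integrable_on S"
    by (meson absolutely_integrable_on_def set_borel_integral_eq_integral(1) set_integrable_norm)
  then have "f absolutely_integrable_on T"
    using set_integrable_subset assms(3,4) by blast
  then show ?thesis
    using set_lebesgue_integral_eq_integral(1) by blast
qed

lemma integrable_on_open_bounded:
  fixes f :: "'a::euclidean_space \<Rightarrow> real"
  assumes "open \<Omega>" "bounded \<Omega>" "continuous_on (closure \<Omega>) f"
  shows "f integrable_on \<Omega>"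
  using integrable_on_subset_of_compact[OF _ assms(3) closure_subset] assms(1,2) by simp

lemma integrable_on_smooth_bounded_domain:
  fixes f :: "'a::euclidean_space \<Rightarrow> real"
  assumes "smooth_bounded_domain \<Omega>" "closure \<Omega> \<subseteq> U" "continuous_on U f"
  shows "f integrable_on \<Omega>"
  using assms continuous_on_subset
  by (intro integrable_on_open_bounded) (auto simp: smooth_bounded_domain_def)

lemma integral_nonneg_any:
  fixes f :: "'a::euclidean_space \<Rightarrow> real"
  shows "(\<And>x. x \<in> S \<Longrightarrow> 0 \<le> f x) \<Longrightarrow> 0 \<le> integral S f"
  by (cases "f integrable_on S") (simp_all add: integral_nonneg not_integrable_integral)

section \<open>A cut-off function\<close>

definition ramp_sq :: "real \<Rightarrow> real"
  where "ramp_sq t = (max 0 t)\<^sup>2"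

lemma has_real_derivative_ramp_sq: "(ramp_sq has_real_derivative 2 * max 0 t) (at t)"
proof (cases t "0::real" rule: linorder_cases)
  case less
  have "((\<lambda>z. 0) has_real_derivative 0) (at t)"
    by simp
  then have "(ramp_sq has_real_derivative 0) (at t)"
    by (rule has_field_derivative_transform_within_open[where S="{..<0}"]) (use less in \<open>auto simp: ramp_sq_def\<close>)
  then show ?thesis
    using less by simp
next
  case greater
  have "((\<lambda>z. z\<^sup>2) has_real_derivative 2 * t) (at t)"
    by (auto intro!: derivative_eq_intros)
  then have "(ramp_sq has_real_derivative 2 * t) (at t)"
    by (rule has_field_derivative_transform_within_open[where S="{0<..}"]) (use greater in \<open>auto simp: ramp_sq_def\<close>)
  then show ?thesis
    using greater by simp
next
  case equal
  have "\<forall>\<^sub>F h in at (0::real). (ramp_sq (0 + h) - ramp_sq 0) / h = max 0 h"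
    unfolding eventually_at by (rule exI[of _ 1]) (auto simp: ramp_sq_def power2_eq_square max_def)
  moreover have "((\<lambda>h. max 0 h) \<longlongrightarrow> max 0 0) (at (0::real))"
    by (intro tendsto_intros)
  ultimately show ?thesis
    using equal by (simp add: DERIV_def tendsto_cong)
qed

text \<open>A \<open>C\<^sup>1\<close> piecewise quadratic step from \<open>1\<close> on \<open>]-\<infinity>,-2]\<close> down to \<open>0\<close> on \<open>[-1,\<infinity>[\<close>.\<close>

definition cutoff :: "real \<Rightarrow> real"
  where "cutoff t = 1 - 2 * ramp_sq (t + 2) + 4 * ramp_sq (t + 3/2) - 2 * ramp_sq (t + 1)"

definition cutoff' :: "real \<Rightarrow> real"
  where "cutoff' t = - 4 * max 0 (t + 2) + 8 * max 0 (t + 3/2) - 4 * max 0 (t + 1)"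

lemma has_real_derivative_cutoff: "(cutoff has_real_derivative cutoff' t) (at t)"
proof -
  have "((\<lambda>t. t + c) has_real_derivative 1) (at t)" for c
    by (auto intro!: derivative_eq_intros)
  from DERIV_chain2[OF has_real_derivative_ramp_sq this]
  have shift: "((\<lambda>t. ramp_sq (t + c)) has_real_derivative 2 * max 0 (t + c)) (at t)" for c
    by simp
  show ?thesis
    unfolding cutoff_def[abs_def] cutoff'_def
    by (rule derivative_eq_intros shift refl | simp)+
qed

lemma continuous_on_cutoff': "continuous_on UNIV cutoff'"
  unfolding cutoff'_def[abs_def] by (intro continuous_intros)

lemma continuous_on_cutoff: "continuous_on UNIV cutoff"
  using has_real_derivative_cutoff by (meson DERIV_isCont continuous_at_imp_continuous_on)

lemma cutoff_eq_1: "t \<le> -2 \<Longrightarrow> cutoff t = 1"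
  by (simp add: cutoff_def ramp_sq_def)

lemma cutoff_eq_0: "-1 \<le> t \<Longrightarrow> cutoff t = 0"
  by (simp add: cutoff_def ramp_sq_def power2_eq_square algebra_simps)

lemma cutoff'_eq_0: "t \<le> -2 \<Longrightarrow> cutoff' t = 0"
  by (simp add: cutoff'_def)

lemma cutoff'_nonpos: "cutoff' t \<le> 0"
  by (simp add: cutoff'_def max_def)

lemma cutoff_antimono: "s \<le> t \<Longrightarrow> cutoff t \<le> cutoff s"
  using DERIV_nonpos_imp_nonincreasing[of s t cutoff] has_real_derivative_cutoff cutoff'_nonpos by blast

lemma cutoff_nonneg: "0 \<le> cutoff t"
  using cutoff_antimono[of t "max t (-1)"] cutoff_eq_0[of "max t (-1)"] by simp

lemma cutoff_le_1: "cutoff t \<le> 1"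
  using cutoff_antimono[of "min t (-2)" t] cutoff_eq_1[of "min t (-2)"] by simp

lemma abs_cutoff_mult_le: "\<bar>cutoff t * d\<bar> \<le> \<bar>d\<bar>"
  using mult_right_mono[OF cutoff_le_1 abs_ge_zero] cutoff_nonneg by (simp add: abs_mult)

lemma C1_on_cutoff_compose:
  assumes "C1_on U \<rho> \<rho>'" "0 < \<epsilon>"
  shows "C1_on U (\<lambda>x. cutoff (\<rho> x / \<epsilon>)) (\<lambda>x h. cutoff' (\<rho> x / \<epsilon>) / \<epsilon> * \<rho>' x h)"
proof -
  have "((\<lambda>t. t / \<epsilon>) has_real_derivative 1 / \<epsilon>) (at t)" for t
    using \<open>0 < \<epsilon>\<close> by (auto intro!: derivative_eq_intros)
  from DERIV_chain2[OF has_real_derivative_cutoff this]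
  have "((\<lambda>t. cutoff (t / \<epsilon>)) has_real_derivative cutoff' (t / \<epsilon>) / \<epsilon>) (at t)" for t
    by simp
  moreover have "continuous_on UNIV (\<lambda>t. cutoff' (t / \<epsilon>) / \<epsilon>)"
    by (intro continuous_on_divide continuous_on_compose2[OF continuous_on_cutoff'] continuous_intros)
      (use \<open>0 < \<epsilon>\<close> in auto)
  ultimately show ?thesis
    by (rule C1_on_compose_real[OF assms(1) subset_UNIV open_UNIV])
qed

lemma cutoff'_weighted_le:
  assumes "0 < \<epsilon>" and near: "- 2 * \<epsilon> < r \<Longrightarrow> a \<le> b"
  shows "- (cutoff' (r / \<epsilon>) / \<epsilon>) * a \<le> - (cutoff' (r / \<epsilon>) / \<epsilon>) * b"
proof (cases "- 2 * \<epsilon> < r")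
  case True
  have "0 \<le> - (cutoff' (r / \<epsilon>) / \<epsilon>)"
    using cutoff'_nonpos \<open>0 < \<epsilon>\<close> by (simp add: divide_nonpos_pos)
  then show ?thesis
    by (rule mult_left_mono[OF near[OF True]])
next
  case False
  then have "r / \<epsilon> \<le> -2"
    using \<open>0 < \<epsilon>\<close> by (simp add: divide_le_eq)
  then show ?thesis
    by (simp add: cutoff'_eq_0)
qed

section \<open>A divergence inequality\<close>

locale smooth_sublevel_domain =
  fixes \<Omega> :: "'a::euclidean_space set" and \<rho> :: "'a \<Rightarrow> real"
  assumes open_domain: "open \<Omega>" and bounded_domain: "bounded \<Omega>"
    and domain_eq: "\<Omega> = {x. \<rho> x < 0}"
    and C2_on_defining: "C2_on UNIV \<rho> (\<lambda>x. frechet_derivative \<rho> (at x))"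
    and grad_defining_nonzero: "\<And>x. x \<in> frontier \<Omega> \<Longrightarrow> grad \<rho> x \<noteq> 0"
begin

lemma C1_on_defining: "C1_on UNIV \<rho> (\<lambda>x. frechet_derivative \<rho> (at x))"
  using C2_on_defining by (rule C2_on_imp_C1_on)

lemma continuous_on_defining: "continuous_on S \<rho>"
  by (rule continuous_on_subset[OF C1_on_imp_continuous_on[OF C1_on_defining] subset_UNIV])

lemma continuous_on_grad_defining: "continuous_on S (grad \<rho>)"
  by (rule continuous_on_subset[OF continuous_on_grad[OF C1_on_defining] subset_UNIV])

lemma continuous_on_div_grad_defining: "continuous_on S (div_field (grad \<rho>))"
proof -
  obtain G where "C1_on UNIV (grad \<rho>) G"
    using C1_on_grad[OF open_UNIV C2_on_defining] by blast
  then show ?thesis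
    by (rule continuous_on_subset[OF continuous_on_div_field subset_UNIV])
qed

lemmas integrable_on_domain = integrable_on_open_bounded[OF open_domain bounded_domain]

lemma compact_sublevel:
  assumes "0 < \<epsilon>"
  shows "compact {x. \<rho> x \<le> - \<epsilon>}" "{x. \<rho> x \<le> - \<epsilon>} \<subseteq> \<Omega>"
proof -
  show "{x. \<rho> x \<le> - \<epsilon>} \<subseteq> \<Omega>"
    using assms domain_eq by auto
  moreover have "closed {x. \<rho> x \<le> - \<epsilon>}"
    by (rule closed_Collect_le[OF continuous_on_defining continuous_on_const])
  ultimately show "compact {x. \<rho> x \<le> - \<epsilon>}"
    using bounded_subset[OF bounded_domain] by (simp add: compact_eq_bounded_closed)
qed

lemma has_integral_cutoff_div_field:
  assumes "open U" "closure \<Omega> \<subseteq> U" and F: "C1_on U F F'" and "0 < \<epsilon>"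
  shows "((\<lambda>x. cutoff (\<rho> x / \<epsilon>) * div_field F x + cutoff' (\<rho> x / \<epsilon>) / \<epsilon> * (grad \<rho> x \<bullet> F x))
    has_integral 0) \<Omega>"
proof -
  note \<chi> = C1_on_cutoff_compose[OF C1_on_defining \<open>0 < \<epsilon>\<close>]
  have "\<Omega> \<subseteq> U"
    using assms(2) closure_subset by blast
  have "cutoff (\<rho> y / \<epsilon>) *\<^sub>R F y = 0" if "y \<notin> {x. \<rho> x \<le> - \<epsilon>}" for y
    using that \<open>0 < \<epsilon>\<close> cutoff_eq_0[of "\<rho> y / \<epsilon>"] by (simp add: field_simps)
  with has_integral_div_field_compact_support[OF \<open>open U\<close> compact_sublevel[OF \<open>0 < \<epsilon>\<close>] \<open>\<Omega> \<subseteq> U\<close>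
      C1_on_scaleR[OF C1_on_subset[OF \<chi> subset_UNIV] F]]
  have "(div_field (\<lambda>y. cutoff (\<rho> y / \<epsilon>) *\<^sub>R F y) has_integral 0) \<Omega>"
    by blast
  then show ?thesis
  proof (rule has_integral_cong[THEN iffD1, rotated])
    fix x assume "x \<in> \<Omega>"
    with \<open>\<Omega> \<subseteq> U\<close> have dF: "(F has_derivative F' x) (at x)"
      using C1_on_has_derivative[OF F] by blast
    have d\<chi>: "((\<lambda>x. cutoff (\<rho> x / \<epsilon>)) has_derivative (\<lambda>h. cutoff' (\<rho> x / \<epsilon>) / \<epsilon> * frechet_derivative \<rho> (at x) h)) (at x)"
      using C1_on_has_derivative[OF \<chi>] by simp
    show "div_field (\<lambda>y. cutoff (\<rho> y / \<epsilon>) *\<^sub>R F y) x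
        = cutoff (\<rho> x / \<epsilon>) * div_field F x + cutoff' (\<rho> x / \<epsilon>) / \<epsilon> * (grad \<rho> x \<bullet> F x)"
      using div_field_scaleR[OF d\<chi> dF] inner_grad[OF d\<chi>] inner_grad[OF C1_on_has_derivative[OF C1_on_defining]]
      by simp
  qed
qed

lemma integral_cutoff_div_field:
  assumes "open U" "closure \<Omega> \<subseteq> U" and F: "C1_on U F F'" and "\<epsilon> > 0"
  shows "integral \<Omega> (\<lambda>x. cutoff (\<rho> x / \<epsilon>) * div_field F x)
    = - integral \<Omega> (\<lambda>x. cutoff' (\<rho> x / \<epsilon>) / \<epsilon> * (grad \<rho> x \<bullet> F x))"
proof -
  have F_cont: "continuous_on (closure \<Omega>) F" "continuous_on (closure \<Omega>) (div_field F)"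
    using continuous_on_subset[OF C1_on_imp_continuous_on[OF F] assms(2)]
      continuous_on_subset[OF continuous_on_div_field[OF F] assms(2)] by simp_all
  have "continuous_on (closure \<Omega>) (\<lambda>x. cutoff (\<rho> x / \<epsilon>))" "continuous_on (closure \<Omega>) (\<lambda>x. cutoff' (\<rho> x / \<epsilon>))"
    by (intro continuous_on_compose2[OF continuous_on_cutoff] continuous_on_compose2[OF continuous_on_cutoff']
        continuous_on_divide continuous_on_defining continuous_on_const; use \<open>\<epsilon> > 0\<close> in simp)+
  then have "(\<lambda>x. cutoff (\<rho> x / \<epsilon>) * div_field F x) integrable_on \<Omega>"
    "(\<lambda>x. cutoff' (\<rho> x / \<epsilon>) / \<epsilon> * (grad \<rho> x \<bullet> F x)) integrable_on \<Omega>"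
    using F_cont \<open>\<epsilon> > 0\<close> by (intro integrable_on_domain continuous_intros continuous_on_grad_defining; simp)+
  with integral_unique[OF has_integral_cutoff_div_field[OF assms]] show ?thesis
    by (simp add: integral_add eq_neg_iff_add_eq_0)
qed

lemma margin_near_frontier:
  fixes k :: "'a \<Rightarrow> real"
  assumes k: "continuous_on (closure \<Omega>) k" and neg: "\<And>x. x \<in> frontier \<Omega> \<Longrightarrow> k x < 0"
  shows "\<exists>\<epsilon>>0. \<forall>x\<in>\<Omega>. - \<epsilon> \<le> \<rho> x \<longrightarrow> k x < 0"
proof -
  define C where "C = closure \<Omega> \<inter> k -` {0..}"
  have "compact C"
    unfolding C_def using bounded_domain continuous_closed_preimage[OF k closed_closure closed_atLeast]
    by (simp add: compact_eq_bounded_closed bounded_Int bounded_closure)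
  have "C \<subseteq> \<Omega>"
  proof
    fix x assume "x \<in> C"
    then have "x \<in> closure \<Omega>" "\<not> k x < 0"
      by (auto simp: C_def)
    then show "x \<in> \<Omega>"
      using neg[of x] open_domain by (auto simp: frontier_def interior_open)
  qed
  have k_neg: "k x < 0" if "x \<in> \<Omega>" "x \<notin> C" for x
    using that closure_subset by (auto simp: C_def)
  show ?thesis
  proof (cases "C = {}")
    case True
    then show ?thesis
      using k_neg by (intro exI[of _ 1]) auto
  next
    case False
    obtain xm where "xm \<in> C" and xm: "\<And>y. y \<in> C \<Longrightarrow> \<rho> y \<le> \<rho> xm"
      using continuous_attains_sup[OF \<open>compact C\<close> False continuous_on_defining] by blast
    then have "\<rho> xm < 0"
      using \<open>C \<subseteq> \<Omega>\<close> domain_eq by blast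
    have "k x < 0" if "x \<in> \<Omega>" "\<rho> xm / 2 \<le> \<rho> x" for x
    proof (rule k_neg[OF that(1)])
      show "x \<notin> C"
        using that(2) xm[of x] \<open>\<rho> xm < 0\<close> by linarith
    qed
    then show ?thesis
      using \<open>\<rho> xm < 0\<close> by (intro exI[of _ "- \<rho> xm / 2"]) auto
  qed
qed

lemma integral_cutoff_div_field_le_margin:
  assumes U: "open U" "closure \<Omega> \<subseteq> U" and X: "C1_on U X X'" and "0 \<le> \<delta>" "0 < \<epsilon>"
    and margin: "\<And>x. x \<in> \<Omega> \<Longrightarrow> - 2 * \<epsilon> < \<rho> x \<Longrightarrow> grad \<rho> x \<bullet> X x \<le> \<delta> * (grad \<rho> x \<bullet> grad \<rho> x)"
  shows "integral \<Omega> (\<lambda>x. cutoff (\<rho> x / \<epsilon>) * div_field X x) \<le> \<delta> * integral \<Omega> (\<lambda>x. \<bar>div_field (grad \<rho>) x\<bar>)"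
proof -
  define N where "N = grad \<rho>"
  obtain N' where N: "C1_on U N N'"
    using C1_on_grad[OF open_UNIV C2_on_defining] C1_on_subset unfolding N_def by blast
  let ?c = "\<lambda>x. - (cutoff' (\<rho> x / \<epsilon>) / \<epsilon>)"
  have "continuous_on (closure \<Omega>) (\<lambda>x. cutoff' (\<rho> x / \<epsilon>))"
    using \<open>0 < \<epsilon>\<close> by (intro continuous_intros continuous_on_compose2[OF continuous_on_cutoff'] continuous_on_defining) auto
  then have integrable: "(\<lambda>x. ?c x * (N x \<bullet> F x)) integrable_on \<Omega>" if "continuous_on U F" for F
    using that C1_on_imp_continuous_on[OF N] \<open>0 < \<epsilon>\<close>
    by (intro integrable_on_domain continuous_intros) (auto intro: continuous_on_subset[OF _ U(2)])
  have "integral \<Omega> (\<lambda>x. cutoff (\<rho> x / \<epsilon>) * div_field X x) = integral \<Omega> (\<lambda>x. ?c x * (N x \<bullet> X x))"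
    using integral_cutoff_div_field[OF U X \<open>0 < \<epsilon>\<close>] by (simp add: N_def)
  also have "\<dots> \<le> integral \<Omega> (\<lambda>x. \<delta> * (?c x * (N x \<bullet> N x)))"
  proof (rule integral_le)
    show "(\<lambda>x. ?c x * (N x \<bullet> X x)) integrable_on \<Omega>"
      by (rule integrable[OF C1_on_imp_continuous_on[OF X]])
    show "(\<lambda>x. \<delta> * (?c x * (N x \<bullet> N x))) integrable_on \<Omega>"
      by (rule integrable_on_mult_right[OF integrable[OF C1_on_imp_continuous_on[OF N]]])
    show "?c x * (N x \<bullet> X x) \<le> \<delta> * (?c x * (N x \<bullet> N x))" if "x \<in> \<Omega>" for x
      using cutoff'_weighted_le[OF \<open>0 < \<epsilon>\<close>, of "\<rho> x" "N x \<bullet> X x" "\<delta> * (N x \<bullet> N x)"] margin[OF that]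
      by (simp add: N_def algebra_simps)
  qed
  also have "\<dots> = \<delta> * integral \<Omega> (\<lambda>x. cutoff (\<rho> x / \<epsilon>) * div_field N x)"
    using integral_cutoff_div_field[OF U N \<open>0 < \<epsilon>\<close>] by (simp add: N_def)
  also have "\<dots> \<le> \<delta> * integral \<Omega> (\<lambda>x. \<bar>div_field N x\<bar>)"
  proof (intro mult_left_mono integral_le)
    show "(\<lambda>x. cutoff (\<rho> x / \<epsilon>) * div_field N x) integrable_on \<Omega>" "(\<lambda>x. \<bar>div_field N x\<bar>) integrable_on \<Omega>"
      using \<open>0 < \<epsilon>\<close> continuous_on_div_grad_defining unfolding N_def
      by (intro integrable_on_domain continuous_intros continuous_on_compose2[OF continuous_on_cutoff]
          continuous_on_defining; auto)+
    show "cutoff (\<rho> x / \<epsilon>) * div_field N x \<le> \<bar>div_field N x\<bar>" for x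
      using abs_cutoff_mult_le[of "\<rho> x / \<epsilon>" "div_field N x"] by linarith
  qed (use \<open>0 \<le> \<delta>\<close> in simp)
  finally show ?thesis
    by (simp add: N_def)
qed

lemma integral_cutoff_div_field_le:
  assumes U: "open U" "closure \<Omega> \<subseteq> U" and X: "C1_on U X X'"
    and bd: "\<And>x. x \<in> frontier \<Omega> \<Longrightarrow> X x \<bullet> grad \<rho> x \<le> 0" and "0 < \<delta>"
  shows "\<exists>\<epsilon>0>0. \<forall>\<epsilon>. 0 < \<epsilon> \<longrightarrow> \<epsilon> \<le> \<epsilon>0 \<longrightarrow>
    integral \<Omega> (\<lambda>x. cutoff (\<rho> x / \<epsilon>) * div_field X x) \<le> \<delta> * integral \<Omega> (\<lambda>x. \<bar>div_field (grad \<rho>) x\<bar>)"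
proof -
  let ?k = "\<lambda>x. X x \<bullet> grad \<rho> x - \<delta> * (grad \<rho> x \<bullet> grad \<rho> x)"
  have "continuous_on (closure \<Omega>) ?k"
    using C1_on_imp_continuous_on[OF X] continuous_on_grad_defining
    by (intro continuous_intros) (auto intro: continuous_on_subset[OF _ U(2)])
  moreover have "?k x < 0" if "x \<in> frontier \<Omega>" for x
  proof -
    have "0 < \<delta> * (grad \<rho> x \<bullet> grad \<rho> x)"
      using grad_defining_nonzero[OF that] \<open>0 < \<delta>\<close> by simp
    then show ?thesis
      using bd[OF that] by simp
  qed
  ultimately obtain \<epsilon>1 where "0 < \<epsilon>1" and near: "\<forall>x\<in>\<Omega>. - \<epsilon>1 \<le> \<rho> x \<longrightarrow> ?k x < 0"
    using margin_near_frontier by blast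
  have "integral \<Omega> (\<lambda>x. cutoff (\<rho> x / \<epsilon>) * div_field X x) \<le> \<delta> * integral \<Omega> (\<lambda>x. \<bar>div_field (grad \<rho>) x\<bar>)"
    if "0 < \<epsilon>" "\<epsilon> \<le> \<epsilon>1 / 2" for \<epsilon>
  proof (rule integral_cutoff_div_field_le_margin[OF U X _ \<open>0 < \<epsilon>\<close>])
    show "grad \<rho> x \<bullet> X x \<le> \<delta> * (grad \<rho> x \<bullet> grad \<rho> x)" if "x \<in> \<Omega>" "- 2 * \<epsilon> < \<rho> x" for x
      using near \<open>\<epsilon> \<le> \<epsilon>1 / 2\<close> that inner_commute[of "grad \<rho> x" "X x"] by fastforce
  qed (use \<open>0 < \<delta>\<close> in simp)
  then show ?thesis
    using \<open>0 < \<epsilon>1\<close> by (intro exI[of _ "\<epsilon>1 / 2"]) auto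
qed

lemma cutoff_integral_tendsto:
  fixes f :: "'a \<Rightarrow> real"
  assumes f: "continuous_on (closure \<Omega>) f"
  shows "(\<lambda>n. integral \<Omega> (\<lambda>x. cutoff (\<rho> x / inverse (real (Suc n))) * f x)) \<longlonglongrightarrow> integral \<Omega> f"
proof (rule dominated_convergence(2))
  show "(\<lambda>x. cutoff (\<rho> x / inverse (real (Suc n))) * f x) integrable_on \<Omega>" for n
    using f by (intro integrable_on_domain continuous_intros continuous_on_compose2[OF continuous_on_cutoff]
        continuous_on_defining) auto
  show "(\<lambda>x. \<bar>f x\<bar>) integrable_on \<Omega>"
    using f by (intro integrable_on_domain continuous_intros)
  show "norm (cutoff (\<rho> x / inverse (real (Suc n))) * f x) \<le> \<bar>f x\<bar>" for n x
    using abs_cutoff_mult_le by simp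
  fix x assume "x \<in> \<Omega>"
  then have "\<rho> x < 0"
    using domain_eq by blast
  obtain n0 :: nat where n0: "- 2 / \<rho> x \<le> real n0"
    using real_arch_simple by blast
  have "\<rho> x / inverse (real (Suc n)) \<le> -2" if "n0 \<le> n" for n
  proof -
    have "- 2 / \<rho> x \<le> real (Suc n)"
      using n0 that by linarith
    then have "real (Suc n) * \<rho> x \<le> (- 2 / \<rho> x) * \<rho> x"
      using \<open>\<rho> x < 0\<close> by (intro mult_right_mono_neg) auto
    moreover have "(- 2 / \<rho> x) * \<rho> x = -2"
      using \<open>\<rho> x < 0\<close> by simp
    ultimately show ?thesis
      by (simp add: divide_inverse mult.commute)
  qed
  then have "\<forall>\<^sub>F n in sequentially. cutoff (\<rho> x / inverse (real (Suc n))) * f x = f x"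
    unfolding eventually_sequentially using cutoff_eq_1 by auto
  then show "(\<lambda>n. cutoff (\<rho> x / inverse (real (Suc n))) * f x) \<longlonglongrightarrow> f x"
    by (rule tendsto_eventually)
qed

theorem integral_div_field_nonpos:
  assumes U: "open U" "closure \<Omega> \<subseteq> U" and X: "C1_on U X X'"
    and bd: "\<And>x. x \<in> frontier \<Omega> \<Longrightarrow> X x \<bullet> grad \<rho> x \<le> 0"
  shows "integral \<Omega> (div_field X) \<le> 0"
proof (rule field_le_epsilon)
  fix e :: real assume "0 < e"
  define M where "M = integral \<Omega> (\<lambda>x. \<bar>div_field (grad \<rho>) x\<bar>)"
  have "0 \<le> M"
    unfolding M_def by (rule integral_nonneg_any) simp
  then obtain \<epsilon>0 where "\<epsilon>0 > 0" and le: "\<And>\<epsilon>. 0 < \<epsilon> \<Longrightarrow> \<epsilon> \<le> \<epsilon>0 \<Longrightarrow>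
      integral \<Omega> (\<lambda>x. cutoff (\<rho> x / \<epsilon>) * div_field X x) \<le> e / (M + 1) * M"
    using integral_cutoff_div_field_le[OF U X bd, of "e / (M + 1)"] \<open>0 < e\<close> unfolding M_def by auto
  obtain n0 :: nat where "inverse (real (Suc n0)) < \<epsilon>0"
    using reals_Archimedean[OF \<open>\<epsilon>0 > 0\<close>] by blast
  have "integral \<Omega> (\<lambda>x. cutoff (\<rho> x / inverse (real (Suc n))) * div_field X x) \<le> e / (M + 1) * M"
    if "n0 \<le> n" for n
  proof (rule le)
    have "inverse (real (Suc n)) \<le> inverse (real (Suc n0))"
      using that by (intro le_imp_inverse_le) auto
    then show "inverse (real (Suc n)) \<le> \<epsilon>0"
      using \<open>inverse (real (Suc n0)) < \<epsilon>0\<close> by linarith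
  qed simp
  then have "\<forall>n\<ge>n0. integral \<Omega> (\<lambda>x. cutoff (\<rho> x / inverse (real (Suc n))) * div_field X x) \<le> e / (M + 1) * M"
    by blast
  then have "integral \<Omega> (div_field X) \<le> e / (M + 1) * M"
    using LIMSEQ_le_const2[OF cutoff_integral_tendsto] continuous_on_div_field[OF X]
      continuous_on_subset[OF _ U(2)] by blast
  also have "\<dots> \<le> e"
    using \<open>0 \<le> M\<close> \<open>0 < e\<close> by (simp add: field_simps)
  finally show "integral \<Omega> (div_field X) \<le> 0 + e"
    by simp
qed

end

lemma smooth_bounded_domain_sublevel:
  assumes "smooth_bounded_domain \<Omega>"
  defines "\<rho> \<equiv> SOME \<rho>. defining_function \<Omega> \<rho>"
  shows "smooth_sublevel_domain \<Omega> \<rho>" and "outward_normal \<Omega> x = grad \<rho> x /\<^sub>R norm (grad \<rho> x)"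
proof -
  have "defining_function \<Omega> \<rho>"
    using assms someI_ex unfolding smooth_bounded_domain_def \<rho>_def by metis
  then show "smooth_sublevel_domain \<Omega> \<rho>"
    using assms(1) Ck_on_2_imp_C2_on[OF open_UNIV]
    unfolding smooth_bounded_domain_def defining_function_def smooth_on_def
    by unfold_locales auto
  show "outward_normal \<Omega> x = grad \<rho> x /\<^sub>R norm (grad \<rho> x)"
    unfolding outward_normal_def \<rho>_def Let_def ..
qed

theorem integral_div_field_nonpos_outward_normal:
  assumes "smooth_bounded_domain \<Omega>" "open U" "closure \<Omega> \<subseteq> U" "C1_on U X X'"
    and "\<And>x. x \<in> frontier \<Omega> \<Longrightarrow> X x \<bullet> outward_normal \<Omega> x \<le> 0"
  shows "integral \<Omega> (div_field X) \<le> 0"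
proof -
  define \<rho> where "\<rho> = (SOME \<rho>. defining_function \<Omega> \<rho>)"
  interpret smooth_sublevel_domain \<Omega> \<rho>
    using smooth_bounded_domain_sublevel(1)[OF assms(1)] unfolding \<rho>_def .
  show ?thesis
  proof (rule integral_div_field_nonpos[OF assms(2-4)])
    fix x assume x: "x \<in> frontier \<Omega>"
    then have "grad \<rho> x \<noteq> 0"
      by (rule grad_defining_nonzero)
    then have "X x \<bullet> grad \<rho> x = (X x \<bullet> outward_normal \<Omega> x) * norm (grad \<rho> x)"
      using smooth_bounded_domain_sublevel(2)[OF assms(1), of x] by (simp add: \<rho>_def)
    then show "X x \<bullet> grad \<rho> x \<le> 0"
      using assms(5)[OF x] by (simp add: mult_nonpos_nonneg)
  qed
qed

section \<open>Picone's identity\<close>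

lemma div_field_cross_difference:
  fixes v vs a :: "'a::euclidean_space \<Rightarrow> real"
  assumes v: "(v has_derivative v') (at x)" and vs: "(vs has_derivative vs') (at x)"
    and F: "((\<lambda>y. a y *\<^sub>R grad v y) has_derivative F') (at x)"
    and G: "((\<lambda>y. a y *\<^sub>R grad vs y) has_derivative G') (at x)"
  shows "div_field (\<lambda>y. vs y *\<^sub>R (a y *\<^sub>R grad v y) - v y *\<^sub>R (a y *\<^sub>R grad vs y)) x
    = vs x * div_field (\<lambda>y. a y *\<^sub>R grad v y) x - v x * div_field (\<lambda>y. a y *\<^sub>R grad vs y) x"
  using div_field_diff[OF has_derivative_scaleR[OF vs F] has_derivative_scaleR[OF v G]]
    div_field_scaleR[OF vs F] div_field_scaleR[OF v G]
  by (simp add: inner_commute)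

lemma inner_grad_picone:
  fixes v r :: "'a::euclidean_space \<Rightarrow> real"
  assumes v: "(v has_derivative v') (at x)" and r: "(r has_derivative r') (at x)" and "0 < r x"
    and "open U" "x \<in> U" and vs_eq: "\<And>y. y \<in> U \<Longrightarrow> vs y = r y * v y"
  shows "grad (\<lambda>y. 1 - r y powr \<beta>) x \<bullet> (vs x *\<^sub>R grad v x - v x *\<^sub>R grad vs x)
    = \<beta> * (v x)\<^sup>2 * r x powr (\<beta> - 1) * (norm (grad r x))\<^sup>2"
proof -
  have "(vs has_derivative (\<lambda>h. r x * v' h + r' h * v x)) (at x)"
    using has_derivative_mult[OF r v] by (rule has_derivative_transform_within_open) (use assms in auto)
  then have grad_vs: "grad vs x \<bullet> grad r x = r x * (grad v x \<bullet> grad r x) + v x * (grad r x \<bullet> grad r x)"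
    using inner_grad[OF v] inner_grad[OF r] by (simp add: inner_grad)
  have "((\<lambda>y. r y powr \<beta>) has_derivative (\<lambda>h. \<beta> * r x powr (\<beta> - 1) * r' h)) (at x)"
    using has_derivative_compose[OF r has_real_derivative_powr[OF \<open>0 < r x\<close>, unfolded has_field_derivative_def]]
    by (simp add: mult.assoc)
  then have "((\<lambda>y. 1 - r y powr \<beta>) has_derivative (\<lambda>h. - (\<beta> * r x powr (\<beta> - 1) * r' h))) (at x)"
    using has_derivative_diff[OF has_derivative_const] by fastforce
  then have "grad (\<lambda>y. 1 - r y powr \<beta>) x \<bullet> (vs x *\<^sub>R grad v x - v x *\<^sub>R grad vs x)
      = - (\<beta> * r x powr (\<beta> - 1) * (grad r x \<bullet> (vs x *\<^sub>R grad v x - v x *\<^sub>R grad vs x)))"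
    using inner_grad[OF r] by (simp add: inner_grad)
  also have "grad r x \<bullet> (vs x *\<^sub>R grad v x - v x *\<^sub>R grad vs x) = - ((v x)\<^sup>2 * (norm (grad r x))\<^sup>2)"
    using vs_eq[OF \<open>x \<in> U\<close>] grad_vs
    by (simp add: inner_commute dot_square_norm power2_eq_square algebra_simps)
  finally show ?thesis
    by simp
qed

lemma C1_on_picone_field:
  fixes v vs a r :: "'a::euclidean_space \<Rightarrow> real"
  assumes "open U" and v: "C2_on U v v'" and vs: "C2_on U vs vs'" and a: "C1_on U a a'"
    and r: "C1_on U r r'" and r_pos: "\<And>x. x \<in> U \<Longrightarrow> 0 < r x"
  shows "\<exists>X'. C1_on U (\<lambda>y. (1 - r y powr \<beta>) *\<^sub>R (vs y *\<^sub>R (a y *\<^sub>R grad v y) - v y *\<^sub>R (a y *\<^sub>R grad vs y))) X'"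
proof -
  obtain Gv Gvs where Gv: "C1_on U (grad v) Gv" and Gvs: "C1_on U (grad vs) Gvs"
    using C1_on_grad[OF \<open>open U\<close> v] C1_on_grad[OF \<open>open U\<close> vs] by blast
  note p = C1_on_diff[OF C1_on_const[of U 1] C1_on_powr[OF r r_pos, of \<beta>]]
  note W = C1_on_diff[OF C1_on_scaleR[OF C2_on_imp_C1_on[OF vs] C1_on_scaleR[OF a Gv]]
      C1_on_scaleR[OF C2_on_imp_C1_on[OF v] C1_on_scaleR[OF a Gvs]]]
  show ?thesis
    using C1_on_scaleR[OF p W] by blast
qed

lemma div_field_picone:
  fixes v vs a r :: "'a::euclidean_space \<Rightarrow> real"
  assumes "open U" "x \<in> U" and v: "C2_on U v v'" and vs: "C2_on U vs vs'" and a: "C1_on U a a'"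
    and r: "C1_on U r r'" and r_pos: "\<And>x. x \<in> U \<Longrightarrow> 0 < r x" and vs_eq: "\<And>x. x \<in> U \<Longrightarrow> vs x = r x * v x"
  shows "div_field (\<lambda>y. (1 - r y powr \<beta>) *\<^sub>R (vs y *\<^sub>R (a y *\<^sub>R grad v y) - v y *\<^sub>R (a y *\<^sub>R grad vs y))) x
    = (1 - r x powr \<beta>) * (vs x * div_field (\<lambda>y. a y *\<^sub>R grad v y) x - v x * div_field (\<lambda>y. a y *\<^sub>R grad vs y) x)
      + \<beta> * a x * (v x)\<^sup>2 * r x powr (\<beta> - 1) * (norm (grad r x))\<^sup>2"
proof -
  obtain Gv Gvs where Gv: "C1_on U (grad v) Gv" and Gvs: "C1_on U (grad vs) Gvs"
    using C1_on_grad[OF \<open>open U\<close> v] C1_on_grad[OF \<open>open U\<close> vs] by blast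
  have dv: "(v has_derivative v' x) (at x)" and dvs: "(vs has_derivative vs' x) (at x)"
    using C1_on_has_derivative[OF C2_on_imp_C1_on] v vs \<open>x \<in> U\<close> by blast+
  have dr: "(r has_derivative r' x) (at x)"
    using C1_on_has_derivative[OF r \<open>x \<in> U\<close>] .
  note dF = has_derivative_scaleR[OF C1_on_has_derivative[OF a \<open>x \<in> U\<close>] C1_on_has_derivative[OF Gv \<open>x \<in> U\<close>]]
  note dG = has_derivative_scaleR[OF C1_on_has_derivative[OF a \<open>x \<in> U\<close>] C1_on_has_derivative[OF Gvs \<open>x \<in> U\<close>]]
  note dp = has_derivative_diff[OF has_derivative_const[of 1]
      C1_on_has_derivative[OF C1_on_powr[OF r r_pos, of \<beta>] \<open>x \<in> U\<close>]]
  note dW = has_derivative_diff[OF has_derivative_scaleR[OF dvs dF] has_derivative_scaleR[OF dv dG]]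
  have "grad (\<lambda>y. 1 - r y powr \<beta>) x \<bullet> (vs x *\<^sub>R (a x *\<^sub>R grad v x) - v x *\<^sub>R (a x *\<^sub>R grad vs x))
      = a x * (grad (\<lambda>y. 1 - r y powr \<beta>) x \<bullet> (vs x *\<^sub>R grad v x - v x *\<^sub>R grad vs x))"
    by (simp add: algebra_simps)
  also have "\<dots> = \<beta> * a x * (v x)\<^sup>2 * r x powr (\<beta> - 1) * (norm (grad r x))\<^sup>2"
    using inner_grad_picone[OF dv dr r_pos[OF \<open>x \<in> U\<close>] \<open>open U\<close> \<open>x \<in> U\<close> vs_eq] by simp
  finally show ?thesis
    using div_field_scaleR[OF dp dW] div_field_cross_difference[OF dv dvs dF dG] by simp
qed

theorem picone_integral_inequality:
  fixes v vs a r :: "'a::euclidean_space \<Rightarrow> real"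
  assumes \<Omega>: "smooth_bounded_domain \<Omega>" and U: "open U" "closure \<Omega> \<subseteq> U"
    and v: "C2_on U v v'" and vs: "C2_on U vs vs'" and a: "C1_on U a a'" and r: "C1_on U r r'"
    and r_pos: "\<And>x. x \<in> U \<Longrightarrow> 0 < r x" and vs_eq: "\<And>x. x \<in> U \<Longrightarrow> vs x = r x * v x"
    and boundary: "\<And>x. x \<in> frontier \<Omega> \<Longrightarrow>
      a x * (1 - r x powr \<beta>) * (vs x * normal_deriv \<Omega> v x - v x * normal_deriv \<Omega> vs x) \<le> 0"
  shows "integral \<Omega> (\<lambda>x. (1 - r x powr \<beta>) *
      (vs x * div_field (\<lambda>y. a y *\<^sub>R grad v y) x - v x * div_field (\<lambda>y. a y *\<^sub>R grad vs y) x))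
    \<le> - integral \<Omega> (\<lambda>x. \<beta> * a x * (v x)\<^sup>2 * r x powr (\<beta> - 1) * (norm (grad r x))\<^sup>2)"
proof -
  define X where "X y = (1 - r y powr \<beta>) *\<^sub>R (vs y *\<^sub>R (a y *\<^sub>R grad v y) - v y *\<^sub>R (a y *\<^sub>R grad vs y))" for y
  define Q where "Q x = \<beta> * a x * (v x)\<^sup>2 * r x powr (\<beta> - 1) * (norm (grad r x))\<^sup>2" for x
  obtain X' where X: "C1_on U X X'"
    using C1_on_picone_field[OF U(1) v vs a r r_pos] unfolding X_def by blast
  have div_nonpos: "integral \<Omega> (div_field X) \<le> 0"
  proof (rule integral_div_field_nonpos_outward_normal[OF \<Omega> U X])
    fix x assume "x \<in> frontier \<Omega>"
    then have "x \<in> U"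
      using U(2) by (auto simp: frontier_def)
    then have "normal_deriv \<Omega> v x = grad v x \<bullet> outward_normal \<Omega> x"
      "normal_deriv \<Omega> vs x = grad vs x \<bullet> outward_normal \<Omega> x"
      using v vs by (auto intro!: normal_deriv_eq_inner_grad C1_on_has_derivative C2_on_imp_C1_on)
    then show "X x \<bullet> outward_normal \<Omega> x \<le> 0"
      using boundary[OF \<open>x \<in> frontier \<Omega>\<close>] by (simp add: X_def algebra_simps)
  qed
  have identity: "div_field X x = (1 - r x powr \<beta>) *
      (vs x * div_field (\<lambda>y. a y *\<^sub>R grad v y) x - v x * div_field (\<lambda>y. a y *\<^sub>R grad vs y) x) + Q x"
    if "x \<in> U" for x
    unfolding X_def[abs_def] Q_def by (rule div_field_picone[OF U(1) that v vs a r r_pos vs_eq])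
  have "continuous_on U Q"
    unfolding Q_def[abs_def] using r_pos
    by (intro continuous_intros C1_on_imp_continuous_on[OF a] C1_on_imp_continuous_on[OF r]
        C1_on_imp_continuous_on[OF C2_on_imp_C1_on[OF v]] continuous_on_grad[OF r]) fastforce
  then have integrable: "div_field X integrable_on \<Omega>" "Q integrable_on \<Omega>"
    using integrable_on_smooth_bounded_domain[OF \<Omega> U(2)] continuous_on_div_field[OF X] by blast+
  have "integral \<Omega> (\<lambda>x. (1 - r x powr \<beta>) *
      (vs x * div_field (\<lambda>y. a y *\<^sub>R grad v y) x - v x * div_field (\<lambda>y. a y *\<^sub>R grad vs y) x))
    = integral \<Omega> (div_field X) - integral \<Omega> Q"
    unfolding integral_diff[OF integrable, symmetric]
    by (rule integral_cong) (use identity U(2) closure_subset in force)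
  then show ?thesis
    using div_nonpos by (simp add: Q_def[abs_def])
qed

section \<open>The two applications\<close>

lemma nonincreasing_quotient_boundary_term:
  fixes p g :: "real \<Rightarrow> real"
  assumes "0 \<le> a" "0 < u" "0 < u'" "0 < p u" "0 < p u'" "0 \<le> \<beta>"
    and p_mono: "\<And>s t. 0 < s \<Longrightarrow> s \<le> t \<Longrightarrow> p s \<le> p t"
    and g_mono: "\<And>s t. 0 < s \<Longrightarrow> s \<le> t \<Longrightarrow> g t / p t \<le> g s / p s"
  shows "a * (1 - (p u' / p u) powr \<beta>) * (p u' * g u - p u * g u') \<le> 0"
proof -
  have "(1 - (p u' / p u) powr \<beta>) * (p u' * g u - p u * g u') \<le> 0"
  proof (cases "u' \<le> u")
    case True
    have "(p u' / p u) powr \<beta> \<le> 1"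
      using p_mono[OF \<open>0 < u'\<close> True] assms by (intro powr_le1) auto
    moreover have "g u / p u \<le> g u' / p u'"
      using g_mono[OF \<open>0 < u'\<close> True] .
    then have "p u' * g u \<le> p u * g u'"
      using assms by (simp add: field_simps)
    ultimately show ?thesis
      by (intro mult_nonneg_nonpos) auto
  next
    case False
    have "1 \<le> (p u' / p u) powr \<beta>"
      using p_mono[OF \<open>0 < u\<close>, of u'] False assms by (intro ge_one_powr_ge_zero) auto
    moreover have "g u' / p u' \<le> g u / p u"
      using g_mono[OF \<open>0 < u\<close>, of u'] False by simp
    then have "p u * g u' \<le> p u' * g u"
      using assms by (simp add: field_simps)
    ultimately show ?thesis
      by (intro mult_nonpos_nonneg) auto
  qed
  then show ?thesis
    using \<open>0 \<le> a\<close> by (simp add: mult.assoc mult_nonneg_nonpos)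
qed

lemma positive_open_neighbourhood:
  fixes f :: "'a::topological_space \<Rightarrow> real"
  assumes "open U" "S \<subseteq> U" "continuous_on U f" "\<And>x. x \<in> S \<Longrightarrow> 0 < f x"
  shows "\<exists>V. open V \<and> S \<subseteq> V \<and> V \<subseteq> U \<and> (\<forall>x\<in>V. 0 < f x)"
proof (intro exI conjI)
  show "open (U \<inter> f -` {0<..})"
    by (rule continuous_open_preimage[OF assms(3,1) open_greaterThan])
qed (use assms in auto)

lemma C22_closure_has_real_derivative:
  assumes "C22_closure S \<Phi>" "x \<in> S" "0 \<le> u"
  shows "(\<Phi> x has_real_derivative deriv (\<Phi> x) u) (at u)"
proof -
  obtain V where "open V" "S \<times> {0..} \<subseteq> V" "Ck_on 2 V (\<lambda>(x, u). \<Phi> x u)"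
    using assms(1) unfolding C22_closure_def by blast
  then have "((\<lambda>(x, u). \<Phi> x u) has_derivative frechet_derivative (\<lambda>(x, u). \<Phi> x u) (at (x, u))) (at (x, u))"
    using assms(2,3) C1_on_has_derivative[OF Ck_on_Suc_imp_C1_on[of V 1]] by (auto simp: numeral_2_eq_2)
  from has_derivative_compose[OF has_derivative_Pair[OF has_derivative_const has_derivative_ident] this]
  have "\<Phi> x differentiable (at u)"
    unfolding differentiable_def by auto
  then show ?thesis
    by (simp add: DERIV_deriv_iff_real_differentiable)
qed

lemma C22_closure_strict_mono:
  assumes "C22_closure S \<Phi>" "x \<in> S" and pos: "\<forall>u>0. deriv (\<Phi> x) u > 0" and "0 \<le> s" "s < t"
  shows "\<Phi> x s < \<Phi> x t"
proof (rule DERIV_pos_imp_increasing_open[OF \<open>s < t\<close>])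
  show "\<exists>y. (\<Phi> x has_real_derivative y) (at u) \<and> 0 < y" if "s < u" "u < t" for u
  proof -
    have "0 < u"
      using that \<open>0 \<le> s\<close> by linarith
    then show ?thesis
      using C22_closure_has_real_derivative[OF assms(1,2) less_imp_le[OF \<open>0 < u\<close>]] pos by blast
  qed
  show "continuous_on {s..t} (\<Phi> x)"
  proof (intro continuous_at_imp_continuous_on ballI)
    fix u assume "u \<in> {s..t}"
    then show "isCont (\<Phi> x) u"
      using DERIV_isCont[OF C22_closure_has_real_derivative[OF assms(1,2)]] \<open>0 \<le> s\<close> by simp
  qed
qed

lemma C22_closure_compose:
  fixes \<Phi> :: "'a::euclidean_space \<Rightarrow> real \<Rightarrow> real"
  assumes "C22_closure S \<Phi>" "open U" "S \<subseteq> U" and w: "C2_on U w w'" and "\<And>x. x \<in> S \<Longrightarrow> 0 \<le> w x"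
  shows "\<exists>V D. open V \<and> S \<subseteq> V \<and> V \<subseteq> U \<and> C2_on V (\<lambda>y. \<Phi> y (w y)) D"
proof -
  obtain P where P: "open P" "S \<times> {0..} \<subseteq> P" "Ck_on 2 P (\<lambda>(x, u). \<Phi> x u)"
    using assms(1) unfolding C22_closure_def by blast
  define V where "V = U \<inter> (\<lambda>y. (y, w y)) -` P"
  have "open V"
    unfolding V_def using C1_on_imp_continuous_on[OF C2_on_imp_C1_on[OF w]] \<open>open U\<close> \<open>open P\<close>
    by (intro continuous_open_preimage continuous_intros)
  moreover have "S \<subseteq> V"
  proof
    fix x assume "x \<in> S"
    then have "(x, w x) \<in> S \<times> {0..}"
      using assms(5) by simp
    then show "x \<in> V"
      using P(2) assms(3) \<open>x \<in> S\<close> by (auto simp: V_def)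
  qed
  moreover have "C2_on V (\<lambda>y. \<Phi> y (w y))
      (\<lambda>y h. frechet_derivative (\<lambda>(x, u). \<Phi> x u) (at (y, w y)) (h, w' y h))"
    using C2_on_compose_Pair[OF Ck_on_2_imp_C2_on[OF P(1,3)] C2_on_subset[OF w] _ \<open>open V\<close>]
    by (simp add: V_def)
  ultimately show ?thesis
    unfolding V_def by blast
qed

lemma picone_inequality_power_on:
  fixes \<Omega> :: "'a::euclidean_space set" and w wst a c :: "'a \<Rightarrow> real" and g :: "'a \<Rightarrow> real \<Rightarrow> real"
  assumes dom: "smooth_bounded_domain \<Omega>" and U: "open U" "closure \<Omega> \<subseteq> U"
    and w: "C2_on U w w'" and wst: "C2_on U wst wst'" and a: "C1_on U a a'" and c: "C2_on U c c'"
    and pos: "\<And>x. x \<in> U \<Longrightarrow> 0 < w x \<and> 0 < wst x"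
    and a_nonneg: "\<forall>x\<in>closure \<Omega>. a x \<ge> 0" and c_nonneg: "\<forall>x\<in>closure \<Omega>. c x \<ge> 0" and "0 \<le> \<beta>"
    and mono: "\<forall>x\<in>frontier \<Omega>. \<forall>u v. 0 < u \<longrightarrow> u \<le> v \<longrightarrow> g x v / (c x * v) \<le> g x u / (c x * u)"
    and bw: "\<forall>x\<in>frontier \<Omega>. normal_deriv \<Omega> (\<lambda>y. c y * w y) x = g x (w x)"
    and bws: "\<forall>x\<in>frontier \<Omega>. normal_deriv \<Omega> (\<lambda>y. c y * wst y) x = g x (wst x)"
  shows "integral \<Omega> (\<lambda>x. c x * wst x * (w x powr \<beta> - wst x powr \<beta>) / w x powr \<beta> *
          (div_field (\<lambda>y. a y *\<^sub>R grad (\<lambda>z. c z * w z) y) x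
           - w x / wst x * div_field (\<lambda>y. a y *\<^sub>R grad (\<lambda>z. c z * wst z) y) x))
    \<le> - integral \<Omega> (\<lambda>x. \<beta> * a x * (c x)\<^sup>2 * (w x)\<^sup>2 * (wst x / w x) powr (\<beta> - 1)
          * (norm (grad (\<lambda>y. wst y / w y) x))\<^sup>2)"
proof -
  define r where "r y = wst y / w y" for y
  obtain r' where r: "C1_on U r r'"
    using C1_on_divide[OF C2_on_imp_C1_on[OF wst] C2_on_imp_C1_on[OF w]] pos unfolding r_def by blast
  have r_pos: "0 < r x" and vs_eq: "c x * wst x = r x * (c x * w x)" if "x \<in> U" for x
    using pos[OF that] by (simp_all add: r_def)
  have boundary: "a x * (1 - r x powr \<beta>) * (c x * wst x * normal_deriv \<Omega> (\<lambda>y. c y * w y) x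
      - c x * w x * normal_deriv \<Omega> (\<lambda>y. c y * wst y) x) \<le> 0" if "x \<in> frontier \<Omega>" for x
  proof -
    have "x \<in> closure \<Omega>"
      using that by (simp add: frontier_def)
    then have "0 < w x" "0 < wst x" "0 \<le> c x" "0 \<le> a x"
      using pos U(2) a_nonneg c_nonneg by auto
    show ?thesis
    proof (cases "c x = 0")
      case False
      with \<open>0 \<le> c x\<close> have "0 < c x"
        by simp
      have "a x * (1 - (c x * wst x / (c x * w x)) powr \<beta>) * (c x * wst x * g x (w x) - c x * w x * g x (wst x)) \<le> 0"
        using mono that \<open>0 < c x\<close> \<open>0 < w x\<close> \<open>0 < wst x\<close> \<open>0 \<le> a x\<close> \<open>0 \<le> \<beta>\<close>
        by (intro nonincreasing_quotient_boundary_term) auto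
      then show ?thesis
        using bw bws that \<open>0 < c x\<close> by (simp add: r_def)
    qed simp
  qed
  have main: "integral \<Omega> (\<lambda>x. (1 - r x powr \<beta>) * (c x * wst x * div_field (\<lambda>y. a y *\<^sub>R grad (\<lambda>z. c z * w z) y) x
      - c x * w x * div_field (\<lambda>y. a y *\<^sub>R grad (\<lambda>z. c z * wst z) y) x))
    \<le> - integral \<Omega> (\<lambda>x. \<beta> * a x * (c x * w x)\<^sup>2 * r x powr (\<beta> - 1) * (norm (grad r x))\<^sup>2)"
    by (rule picone_integral_inequality[OF dom U C2_on_mult[OF c w] C2_on_mult[OF c wst] a r r_pos vs_eq boundary])
  moreover have "integral \<Omega> (\<lambda>x. c x * wst x * (w x powr \<beta> - wst x powr \<beta>) / w x powr \<beta> *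
          (div_field (\<lambda>y. a y *\<^sub>R grad (\<lambda>z. c z * w z) y) x
           - w x / wst x * div_field (\<lambda>y. a y *\<^sub>R grad (\<lambda>z. c z * wst z) y) x))
    = integral \<Omega> (\<lambda>x. (1 - r x powr \<beta>) * (c x * wst x * div_field (\<lambda>y. a y *\<^sub>R grad (\<lambda>z. c z * w z) y) x
      - c x * w x * div_field (\<lambda>y. a y *\<^sub>R grad (\<lambda>z. c z * wst z) y) x))"
    by (rule integral_cong) (use pos U(2) closure_subset in \<open>force simp: r_def powr_divide field_simps\<close>)
  ultimately show ?thesis
    by (simp add: r_def[abs_def] power_mult_distrib mult.assoc)
qed

lemma picone_inequality_power:
  fixes \<Omega> :: "'a::euclidean_space set" and w wst a c :: "'a \<Rightarrow> real" and g :: "'a \<Rightarrow> real \<Rightarrow> real"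
  assumes dom: "smooth_bounded_domain \<Omega>"
    and w_C2: "Ck_closure 2 (closure \<Omega>) w" and w_pos: "\<forall>x\<in>closure \<Omega>. w x > 0"
    and wst_C2: "Ck_closure 2 (closure \<Omega>) wst" and wst_pos: "\<forall>x\<in>closure \<Omega>. wst x > 0"
    and a_C1: "Ck_closure 1 (closure \<Omega>) a" and a_nonneg: "\<forall>x\<in>closure \<Omega>. a x \<ge> 0"
    and c_C2: "Ck_closure 2 (closure \<Omega>) c" and c_nonneg: "\<forall>x\<in>closure \<Omega>. c x \<ge> 0"
    and "0 \<le> \<beta>"
    and mono: "\<forall>x\<in>frontier \<Omega>. \<forall>u v. 0 < u \<longrightarrow> u \<le> v \<longrightarrow> g x v / (c x * v) \<le> g x u / (c x * u)"
    and bw: "\<forall>x\<in>frontier \<Omega>. normal_deriv \<Omega> (\<lambda>y. c y * w y) x = g x (w x)"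
    and bws: "\<forall>x\<in>frontier \<Omega>. normal_deriv \<Omega> (\<lambda>y. c y * wst y) x = g x (wst x)"
  shows "integral \<Omega> (\<lambda>x. c x * wst x * (w x powr \<beta> - wst x powr \<beta>) / w x powr \<beta> *
          (div_field (\<lambda>y. a y *\<^sub>R grad (\<lambda>z. c z * w z) y) x
           - w x / wst x * div_field (\<lambda>y. a y *\<^sub>R grad (\<lambda>z. c z * wst z) y) x))
    \<le> - integral \<Omega> (\<lambda>x. \<beta> * a x * (c x)\<^sup>2 * (w x)\<^sup>2 * (wst x / w x) powr (\<beta> - 1)
          * (norm (grad (\<lambda>y. wst y / w y) x))\<^sup>2)"
proof -
  obtain Uw Us Ua Uc where
    "open Uw" "closure \<Omega> \<subseteq> Uw" and w: "C2_on Uw w (\<lambda>x. frechet_derivative w (at x))"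
    and "open Us" "closure \<Omega> \<subseteq> Us" and wst: "C2_on Us wst (\<lambda>x. frechet_derivative wst (at x))"
    and "open Ua" "closure \<Omega> \<subseteq> Ua" and a: "C1_on Ua a (\<lambda>x. frechet_derivative a (at x))"
    and "open Uc" "closure \<Omega> \<subseteq> Uc" and c: "C2_on Uc c (\<lambda>x. frechet_derivative c (at x))"
    using Ck_closure_2_imp_C2_on[OF w_C2] Ck_closure_2_imp_C2_on[OF wst_C2]
      Ck_closure_1_imp_C1_on[OF a_C1] Ck_closure_2_imp_C2_on[OF c_C2] by metis
  let ?U0 = "Uw \<inter> Us \<inter> Ua \<inter> Uc"
  have "continuous_on ?U0 (\<lambda>x. min (w x) (wst x))"
    using C1_on_imp_continuous_on[OF C2_on_imp_C1_on] w wst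
    by (intro continuous_intros) (auto intro: continuous_on_subset)
  moreover have "open ?U0" "closure \<Omega> \<subseteq> ?U0"
    using \<open>open Uw\<close> \<open>open Us\<close> \<open>open Ua\<close> \<open>open Uc\<close> \<open>closure \<Omega> \<subseteq> Uw\<close> \<open>closure \<Omega> \<subseteq> Us\<close>
      \<open>closure \<Omega> \<subseteq> Ua\<close> \<open>closure \<Omega> \<subseteq> Uc\<close> by auto
  moreover have "0 < min (w x) (wst x)" if "x \<in> closure \<Omega>" for x
    using w_pos wst_pos that by simp
  ultimately obtain U where U: "open U" "closure \<Omega> \<subseteq> U" "U \<subseteq> ?U0"
    and pos: "\<forall>x\<in>U. 0 < min (w x) (wst x)"
    using positive_open_neighbourhood[of ?U0 "closure \<Omega>" "\<lambda>x. min (w x) (wst x)"] by blast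
  show ?thesis
  proof (rule picone_inequality_power_on[OF dom U(1,2), where w=w and wst=wst and a=a and c=c and g=g])
    show "C2_on U w (\<lambda>x. frechet_derivative w (at x))" "C2_on U wst (\<lambda>x. frechet_derivative wst (at x))"
      "C1_on U a (\<lambda>x. frechet_derivative a (at x))" "C2_on U c (\<lambda>x. frechet_derivative c (at x))"
      using U(3) w wst a c by (auto intro: C2_on_subset C1_on_subset)
  qed (use pos assms(7-) in auto)
qed

lemma picone_inequality_nonlinear_on:
  fixes \<Omega> :: "'a::euclidean_space set" and w wst a :: "'a \<Rightarrow> real" and \<Phi> g :: "'a \<Rightarrow> real \<Rightarrow> real"
  assumes dom: "smooth_bounded_domain \<Omega>" and U: "open U" "closure \<Omega> \<subseteq> U"
    and v: "C2_on U (\<lambda>y. \<Phi> y (w y)) v'" and vs: "C2_on U (\<lambda>y. \<Phi> y (wst y)) vs'" and a: "C1_on U a a'"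
    and pos: "\<And>x. x \<in> U \<Longrightarrow> 0 < \<Phi> x (w x) \<and> 0 < \<Phi> x (wst x)"
    and w_pos: "\<forall>x\<in>closure \<Omega>. w x > 0" and wst_pos: "\<forall>x\<in>closure \<Omega>. wst x > 0"
    and a_nonneg: "\<forall>x\<in>closure \<Omega>. a x \<ge> 0"
    and \<Phi>_mono: "\<And>x s t. x \<in> closure \<Omega> \<Longrightarrow> 0 < s \<Longrightarrow> s \<le> t \<Longrightarrow> \<Phi> x s \<le> \<Phi> x t"
    and mono: "\<forall>x\<in>frontier \<Omega>. \<forall>u v. 0 < u \<longrightarrow> u \<le> v \<longrightarrow> g x v / \<Phi> x v \<le> g x u / \<Phi> x u"
    and bw: "\<forall>x\<in>frontier \<Omega>. normal_deriv \<Omega> (\<lambda>y. \<Phi> y (w y)) x = g x (w x)"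
    and bws: "\<forall>x\<in>frontier \<Omega>. normal_deriv \<Omega> (\<lambda>y. \<Phi> y (wst y)) x = g x (wst x)"
  shows "integral \<Omega> (\<lambda>x. \<Phi> x (wst x) * (\<Phi> x (w x) - \<Phi> x (wst x)) / \<Phi> x (w x) *
          (div_field (\<lambda>y. a y *\<^sub>R grad (\<lambda>z. \<Phi> z (w z)) y) x
           - \<Phi> x (w x) / \<Phi> x (wst x) * div_field (\<lambda>y. a y *\<^sub>R grad (\<lambda>z. \<Phi> z (wst z)) y) x))
    \<le> - integral \<Omega> (\<lambda>x. a x * (\<Phi> x (w x))\<^sup>2 * (norm (grad (\<lambda>y. \<Phi> y (wst y) / \<Phi> y (w y)) x))\<^sup>2)"
proof -
  define r where "r y = \<Phi> y (wst y) / \<Phi> y (w y)" for y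
  obtain r' where r: "C1_on U r r'"
    using C1_on_divide[OF C2_on_imp_C1_on[OF vs] C2_on_imp_C1_on[OF v]] pos unfolding r_def by blast
  have r_pos: "0 < r x" and vs_eq: "\<Phi> x (wst x) = r x * \<Phi> x (w x)" if "x \<in> U" for x
    using pos[OF that] by (simp_all add: r_def)
  have boundary: "a x * (1 - r x powr 1) * (\<Phi> x (wst x) * normal_deriv \<Omega> (\<lambda>y. \<Phi> y (w y)) x
      - \<Phi> x (w x) * normal_deriv \<Omega> (\<lambda>y. \<Phi> y (wst y)) x) \<le> 0" if "x \<in> frontier \<Omega>" for x
  proof -
    have "x \<in> closure \<Omega>"
      using that by (simp add: frontier_def)
    then have "a x * (1 - (\<Phi> x (wst x) / \<Phi> x (w x)) powr 1) * (\<Phi> x (wst x) * g x (w x) - \<Phi> x (w x) * g x (wst x)) \<le> 0"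
      using mono that pos U(2) w_pos wst_pos a_nonneg \<Phi>_mono
      by (intro nonincreasing_quotient_boundary_term) auto
    then show ?thesis
      using bw bws that by (simp add: r_def)
  qed
  have "integral \<Omega> (\<lambda>x. (1 - r x powr 1) * (\<Phi> x (wst x) * div_field (\<lambda>y. a y *\<^sub>R grad (\<lambda>z. \<Phi> z (w z)) y) x
      - \<Phi> x (w x) * div_field (\<lambda>y. a y *\<^sub>R grad (\<lambda>z. \<Phi> z (wst z)) y) x))
    \<le> - integral \<Omega> (\<lambda>x. 1 * a x * (\<Phi> x (w x))\<^sup>2 * r x powr (1 - 1) * (norm (grad r x))\<^sup>2)"
    by (rule picone_integral_inequality[OF dom U v vs a r r_pos vs_eq boundary])
  moreover have "integral \<Omega> (\<lambda>x. \<Phi> x (wst x) * (\<Phi> x (w x) - \<Phi> x (wst x)) / \<Phi> x (w x) *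
          (div_field (\<lambda>y. a y *\<^sub>R grad (\<lambda>z. \<Phi> z (w z)) y) x
           - \<Phi> x (w x) / \<Phi> x (wst x) * div_field (\<lambda>y. a y *\<^sub>R grad (\<lambda>z. \<Phi> z (wst z)) y) x))
    = integral \<Omega> (\<lambda>x. (1 - r x powr 1) * (\<Phi> x (wst x) * div_field (\<lambda>y. a y *\<^sub>R grad (\<lambda>z. \<Phi> z (w z)) y) x
      - \<Phi> x (w x) * div_field (\<lambda>y. a y *\<^sub>R grad (\<lambda>z. \<Phi> z (wst z)) y) x))"
    by (rule integral_cong) (use pos U(2) closure_subset in \<open>force simp: r_def field_simps\<close>)
  moreover have "integral \<Omega> (\<lambda>x. 1 * a x * (\<Phi> x (w x))\<^sup>2 * r x powr (1 - 1) * (norm (grad r x))\<^sup>2)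
    = integral \<Omega> (\<lambda>x. a x * (\<Phi> x (w x))\<^sup>2 * (norm (grad (\<lambda>y. \<Phi> y (wst y) / \<Phi> y (w y)) x))\<^sup>2)"
    by (rule integral_cong) (use pos U(2) closure_subset in \<open>force simp: r_def[abs_def]\<close>)
  ultimately show ?thesis
    by simp
qed

lemma picone_inequality_nonlinear:
  fixes \<Omega> :: "'a::euclidean_space set" and w wst a :: "'a \<Rightarrow> real" and \<Phi> g :: "'a \<Rightarrow> real \<Rightarrow> real"
  assumes dom: "smooth_bounded_domain \<Omega>"
    and w_C2: "Ck_closure 2 (closure \<Omega>) w" and w_pos: "\<forall>x\<in>closure \<Omega>. w x > 0"
    and wst_C2: "Ck_closure 2 (closure \<Omega>) wst" and wst_pos: "\<forall>x\<in>closure \<Omega>. wst x > 0"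
    and a_C1: "Ck_closure 1 (closure \<Omega>) a" and a_nonneg: "\<forall>x\<in>closure \<Omega>. a x \<ge> 0"
    and \<Phi>: "C22_closure (closure \<Omega>) \<Phi>" and \<Phi>0: "\<forall>x\<in>closure \<Omega>. \<Phi> x 0 = 0"
    and \<Phi>': "\<forall>x\<in>closure \<Omega>. \<forall>u>0. deriv (\<Phi> x) u > 0"
    and mono: "\<forall>x\<in>frontier \<Omega>. \<forall>u v. 0 < u \<longrightarrow> u \<le> v \<longrightarrow> g x v / \<Phi> x v \<le> g x u / \<Phi> x u"
    and bw: "\<forall>x\<in>frontier \<Omega>. normal_deriv \<Omega> (\<lambda>y. \<Phi> y (w y)) x = g x (w x)"
    and bws: "\<forall>x\<in>frontier \<Omega>. normal_deriv \<Omega> (\<lambda>y. \<Phi> y (wst y)) x = g x (wst x)"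
  shows "integral \<Omega> (\<lambda>x. \<Phi> x (wst x) * (\<Phi> x (w x) - \<Phi> x (wst x)) / \<Phi> x (w x) *
          (div_field (\<lambda>y. a y *\<^sub>R grad (\<lambda>z. \<Phi> z (w z)) y) x
           - \<Phi> x (w x) / \<Phi> x (wst x) * div_field (\<lambda>y. a y *\<^sub>R grad (\<lambda>z. \<Phi> z (wst z)) y) x))
    \<le> - integral \<Omega> (\<lambda>x. a x * (\<Phi> x (w x))\<^sup>2 * (norm (grad (\<lambda>y. \<Phi> y (wst y) / \<Phi> y (w y)) x))\<^sup>2)"
proof -
  have strict_mono: "\<Phi> x s < \<Phi> x t" if "x \<in> closure \<Omega>" "0 \<le> s" "s < t" for x s t
    using C22_closure_strict_mono[OF \<Phi> that(1)] \<Phi>' that by blast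
  obtain Uw Us Ua where
    "open Uw" "closure \<Omega> \<subseteq> Uw" and w: "C2_on Uw w (\<lambda>x. frechet_derivative w (at x))"
    and "open Us" "closure \<Omega> \<subseteq> Us" and wst: "C2_on Us wst (\<lambda>x. frechet_derivative wst (at x))"
    and "open Ua" "closure \<Omega> \<subseteq> Ua" and a: "C1_on Ua a (\<lambda>x. frechet_derivative a (at x))"
    using Ck_closure_2_imp_C2_on[OF w_C2] Ck_closure_2_imp_C2_on[OF wst_C2] Ck_closure_1_imp_C1_on[OF a_C1]
    by metis
  obtain V1 V2 v' vs' where "open V1" "closure \<Omega> \<subseteq> V1" "V1 \<subseteq> Uw" and v: "C2_on V1 (\<lambda>y. \<Phi> y (w y)) v'"
    and "open V2" "closure \<Omega> \<subseteq> V2" "V2 \<subseteq> Us" and vs: "C2_on V2 (\<lambda>y. \<Phi> y (wst y)) vs'"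
    using C22_closure_compose[OF \<Phi> \<open>open Uw\<close> \<open>closure \<Omega> \<subseteq> Uw\<close> w] C22_closure_compose[OF \<Phi> \<open>open Us\<close> \<open>closure \<Omega> \<subseteq> Us\<close> wst]
      w_pos wst_pos by (metis less_imp_le)
  let ?U0 = "V1 \<inter> V2 \<inter> Ua"
  have "continuous_on ?U0 (\<lambda>x. min (\<Phi> x (w x)) (\<Phi> x (wst x)))"
    using C1_on_imp_continuous_on[OF C2_on_imp_C1_on] v vs
    by (intro continuous_intros) (auto intro: continuous_on_subset)
  moreover have "open ?U0" "closure \<Omega> \<subseteq> ?U0"
    using \<open>open V1\<close> \<open>open V2\<close> \<open>open Ua\<close> \<open>closure \<Omega> \<subseteq> V1\<close> \<open>closure \<Omega> \<subseteq> V2\<close> \<open>closure \<Omega> \<subseteq> Ua\<close> by auto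
  moreover have "0 < min (\<Phi> x (w x)) (\<Phi> x (wst x))" if "x \<in> closure \<Omega>" for x
    using strict_mono[OF that order_refl] \<Phi>0 w_pos wst_pos that by simp
  ultimately obtain U where U: "open U" "closure \<Omega> \<subseteq> U" "U \<subseteq> ?U0"
    and pos: "\<forall>x\<in>U. 0 < min (\<Phi> x (w x)) (\<Phi> x (wst x))"
    using positive_open_neighbourhood[of ?U0 "closure \<Omega>" "\<lambda>x. min (\<Phi> x (w x)) (\<Phi> x (wst x))"] by blast
  show ?thesis
  proof (rule picone_inequality_nonlinear_on[OF dom U(1,2), where \<Phi>=\<Phi> and w=w and wst=wst and a=a and g=g])
    show "C2_on U (\<lambda>y. \<Phi> y (w y)) v'" "C2_on U (\<lambda>y. \<Phi> y (wst y)) vs'"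
      "C1_on U a (\<lambda>x. frechet_derivative a (at x))"
      using U(3) v vs a by (auto intro: C2_on_subset C1_on_subset)
    show "\<Phi> x s \<le> \<Phi> x t" if "x \<in> closure \<Omega>" "0 < s" "s \<le> t" for x s t
      using strict_mono[OF that(1), of s t] that by (cases "s = t") auto
  qed (use pos assms in auto)
qed

theorem lemma2p3:
  fixes \<Omega> :: "'a::euclidean_space set"
    and w wst a c :: "'a \<Rightarrow> real"
  assumes dom: "smooth_bounded_domain \<Omega>"
    and w_C2: "Ck_closure 2 (closure \<Omega>) w" and w_pos: "\<forall>x\<in>closure \<Omega>. w x > 0"
    and wst_C2: "Ck_closure 2 (closure \<Omega>) wst" and wst_pos: "\<forall>x\<in>closure \<Omega>. wst x > 0"
    and a_C1: "Ck_closure 1 (closure \<Omega>) a" and a_nonneg: "\<forall>x\<in>closure \<Omega>. a x \<ge> 0"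
    and c_C2: "Ck_closure 2 (closure \<Omega>) c" and c_nonneg: "\<forall>x\<in>closure \<Omega>. c x \<ge> 0"
  shows
   "(\<forall>(\<beta>::real) (g :: 'a \<Rightarrow> real \<Rightarrow> real).
      \<beta> \<ge> 1 \<longrightarrow> C01_boundary (frontier \<Omega>) g \<longrightarrow>
      (\<forall>x\<in>frontier \<Omega>. \<forall>u v. 0 < u \<longrightarrow> u \<le> v \<longrightarrow> g x v / (c x * v) \<le> g x u / (c x * u)) \<longrightarrow>
      (\<forall>x\<in>frontier \<Omega>. normal_deriv \<Omega> (\<lambda>y. c y * w y) x = g x (w x)) \<longrightarrow>
      (\<forall>x\<in>frontier \<Omega>. normal_deriv \<Omega> (\<lambda>y. c y * wst y) x = g x (wst x)) \<longrightarrow>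
      integral \<Omega> (\<lambda>x. c x * wst x * (w x powr \<beta> - wst x powr \<beta>) / w x powr \<beta> *
          (div_field (\<lambda>y. a y *\<^sub>R grad (\<lambda>z. c z * w z) y) x
           - w x / wst x * div_field (\<lambda>y. a y *\<^sub>R grad (\<lambda>z. c z * wst z) y) x))
        \<le> - integral \<Omega> (\<lambda>x. \<beta> * a x * (c x)\<^sup>2 * (w x)\<^sup>2 * (wst x / w x) powr (\<beta> - 1)
                 * (norm (grad (\<lambda>y. wst y / w y) x))\<^sup>2)
      \<and> - integral \<Omega> (\<lambda>x. \<beta> * a x * (c x)\<^sup>2 * (w x)\<^sup>2 * (wst x / w x) powr (\<beta> - 1)
                 * (norm (grad (\<lambda>y. wst y / w y) x))\<^sup>2) \<le> 0)
  \<and> (\<forall>(\<Phi> :: 'a \<Rightarrow> real \<Rightarrow> real) (g :: 'a \<Rightarrow> real \<Rightarrow> real).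
      C22_closure (closure \<Omega>) \<Phi> \<longrightarrow>
      (\<forall>x\<in>closure \<Omega>. \<Phi> x 0 = 0) \<longrightarrow>
      (\<forall>x\<in>closure \<Omega>. \<forall>u>0. deriv (\<Phi> x) u > 0) \<longrightarrow>
      C01_boundary (frontier \<Omega>) g \<longrightarrow>
      (\<forall>x\<in>frontier \<Omega>. \<forall>u v. 0 < u \<longrightarrow> u \<le> v \<longrightarrow> g x v / \<Phi> x v \<le> g x u / \<Phi> x u) \<longrightarrow>
      (\<forall>x\<in>frontier \<Omega>. normal_deriv \<Omega> (\<lambda>y. \<Phi> y (w y)) x = g x (w x)) \<longrightarrow>
      (\<forall>x\<in>frontier \<Omega>. normal_deriv \<Omega> (\<lambda>y. \<Phi> y (wst y)) x = g x (wst x)) \<longrightarrow>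
      integral \<Omega> (\<lambda>x. \<Phi> x (wst x) * (\<Phi> x (w x) - \<Phi> x (wst x)) / \<Phi> x (w x) *
          (div_field (\<lambda>y. a y *\<^sub>R grad (\<lambda>z. \<Phi> z (w z)) y) x
           - \<Phi> x (w x) / \<Phi> x (wst x) * div_field (\<lambda>y. a y *\<^sub>R grad (\<lambda>z. \<Phi> z (wst z)) y) x))
        \<le> - integral \<Omega> (\<lambda>x. a x * (\<Phi> x (w x))\<^sup>2 * (norm (grad (\<lambda>y. \<Phi> y (wst y) / \<Phi> y (w y)) x))\<^sup>2)
      \<and> - integral \<Omega> (\<lambda>x. a x * (\<Phi> x (w x))\<^sup>2 * (norm (grad (\<lambda>y. \<Phi> y (wst y) / \<Phi> y (w y)) x))\<^sup>2) \<le> 0)"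
  apply (intro conjI allI impI)
  subgoal
    by (rule picone_inequality_power[OF dom w_C2 w_pos wst_C2 wst_pos a_C1 a_nonneg c_C2 c_nonneg])
      (assumption | linarith)+
  subgoal
    using a_nonneg closure_subset[of \<Omega>] by (auto intro!: integral_nonneg_any mult_nonneg_nonneg)
  subgoal
    by (rule picone_inequality_nonlinear[OF dom w_C2 w_pos wst_C2 wst_pos a_C1 a_nonneg])
  subgoal
    using a_nonneg closure_subset[of \<Omega>] by (auto intro!: integral_nonneg_any mult_nonneg_nonneg)
  done

end
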